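(* Let $Q=(G\leftleftarrows A)$ be a path-connected group-like graph. Then the associated graded Hopf algebra $(\mathcal D(Q)\xrightarrow{\phi_*}\mathcal D(G))$ in $\mathcal{LM}$ is an irreducible cocommutative Hopf algebra.
   Context: A group-like graph is a directed graph $(G\overset{s}{\underset{t}{\leftleftarrows}}A)$ with an associative multiplication from its Cartesian square to itself making $G$ a group, giving a two-sided $G$-action on $A$ with $s,t$ equivariant; path-connected means connected as an undirected graph. Over a field $\mathbf k$ of characteristic $0$, $(\mathbf k[A]\xrightarrow{\phi}\mathbf k[G])$, $\phi(a)=t(a)-s(a)$, is a Hopf algebra in the Loday–Pirashvili category $\mathcal{LM}$ (objects: linear maps $U\to V$; tensor product $(U\to V)\otimes(U'\to V')=(U\otimes V'+V\otimes U'\to V\otimes V')$) with the $\mathbf k[G]$-bimodule structure on $\mathbf k[A]$ induced by the $G$-action, coproduct $\Delta_0(g)=g\otimes g$, coaction $\Delta_1(a)=a\otimes t(a)+s(a)\otimes a$ into $\mathbf k[A]\otimes\mathbf k[G]+\mathbf k[G]\otimes\mathbf k[A]$, and antipode $S_0(g)=g^{-1}$, $S_1(a)=-s(a)^{-1}\cdot a\cdot t(a)^{-1}$. Let $I(G)$ be the augmentation ideal, $I^0(G)=\mathbf k[G]$, and $I^n(A)$ the span of $v_1\cdot a\cdot v_2$ with $a\in A$, $v_1\in I^k(G)$, $v_2\in I^{n-k}(G)$. These filtrations are respected by all structure maps, and $\phi(I^n(A))\subseteq I^{n+1}(G)$. Set $\mathcal D(G)=\bigoplus_n I^n(G)/I^{n+1}(G)$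 and $\mathcal D(Q)=\bigoplus_n I^n(A)/I^{n+1}(A)$, with induced graded Hopf algebra structure in $\mathcal{LM}$; the induced map $\phi_*:\mathcal D(Q)\to\mathcal D(G)$ raises degree by one. Cocommutative means that $\Delta_0$ is cocommutative and $\Delta_1$ is invariant under the flip $\mathcal D(Q)\otimes\mathcal D(G)+\mathcal D(G)\otimes\mathcal D(Q)\to\mathcal D(G)\otimes\mathcal D(Q)+\mathcal D(Q)\otimes\mathcal D(G)$; irreducible means that $\mathcal D(G)$ is an irreducible coalgebra. *)

theory Defs
  imports "HOL-Algebra.Group"
begin

text \<open>A group-like graph: a group G (vertices = carrier G), a set A of arrows with
 source/target maps s, t into carrier G, and a two-sided (unital, associative)
 G-action on A (the multiplication restricted to the arrows A x G and G x A of the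
 Cartesian square) such that s and t are equivariant.\<close>

definition group_like_graph ::
  "('g, 'm) monoid_scheme \<Rightarrow> 'a set \<Rightarrow> ('a \<Rightarrow> 'g) \<Rightarrow> ('a \<Rightarrow> 'g)
   \<Rightarrow> ('g \<Rightarrow> 'a \<Rightarrow> 'a) \<Rightarrow> ('a \<Rightarrow> 'g \<Rightarrow> 'a) \<Rightarrow> bool" where
  "group_like_graph G A s t lact ract \<longleftrightarrow>
     group G \<and>
     (\<forall>a\<in>A. s a \<in> carrier G \<and> t a \<in> carrier G) \<and>
     (\<forall>g\<in>carrier G. \<forall>a\<in>A. lact g a \<in> A \<and> ract a g \<in> A) \<and>
     (\<forall>a\<in>A. lact \<one>\<^bsub>G\<^esub> a = a \<and> ract a \<one>\<^bsub>G\<^esub> = a) \<and>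
     (\<forall>g\<in>carrier G. \<forall>h\<in>carrier G. \<forall>a\<in>A.
        lact (g \<otimes>\<^bsub>G\<^esub> h) a = lact g (lact h a) \<and>
        ract a (g \<otimes>\<^bsub>G\<^esub> h) = ract (ract a g) h \<and>
        ract (lact g a) h = lact g (ract a h)) \<and>
     (\<forall>g\<in>carrier G. \<forall>a\<in>A.
        s (lact g a) = g \<otimes>\<^bsub>G\<^esub> s a \<and> t (lact g a) = g \<otimes>\<^bsub>G\<^esub> t a \<and>
        s (ract a g) = s a \<otimes>\<^bsub>G\<^esub> g \<and> t (ract a g) = t a \<otimes>\<^bsub>G\<^esub> g)"

definition path_connected ::
  "('g, 'm) monoid_scheme \<Rightarrow> 'a set \<Rightarrow> ('a \<Rightarrow> 'g) \<Rightarrow> ('a \<Rightarrow> 'g) \<Rightarrow> bool" where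
  "path_connected G A s t \<longleftrightarrow>
     (\<forall>g\<in>carrier G. \<forall>h\<in>carrier G.
        (g, h) \<in> ({(s a, t a) | a. a \<in> A} \<union> {(t a, s a) | a. a \<in> A})\<^sup>*)"

definition supp :: "('b \<Rightarrow> 'k::zero) \<Rightarrow> 'b set" where
  "supp f = {x. f x \<noteq> 0}"

definition free :: "'b set \<Rightarrow> ('b \<Rightarrow> 'k::zero) set" where
  "free X = {f. finite (supp f) \<and> supp f \<subseteq> X}"

definition delta :: "'b \<Rightarrow> 'b \<Rightarrow> 'k::{zero,one}" where
  "delta x = (\<lambda>y. if y = x then 1 else 0)"

definition lspan :: "('b \<Rightarrow> 'k::field) set \<Rightarrow> ('b \<Rightarrow> 'k) set" where
  "lspan S = {f. \<exists>T r. finite T \<and> T \<subseteq> S \<and> f = (\<lambda>x. \<Sum>u\<in>T. r u * u x)}"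

text \<open>Tensor product of vectors: k[X] (x) k[Y] = k[X x Y].\<close>
definition tens :: "('b \<Rightarrow> 'k::field) \<Rightarrow> ('c \<Rightarrow> 'k) \<Rightarrow> ('b \<times> 'c \<Rightarrow> 'k)" where
  "tens u v = (\<lambda>(x, y). u x * v y)"

definition tspace :: "('b \<Rightarrow> 'k::field) set \<Rightarrow> ('c \<Rightarrow> 'k) set \<Rightarrow> ('b \<times> 'c \<Rightarrow> 'k) set" where
  "tspace U V = lspan {tens u v | u v. u \<in> U \<and> v \<in> V}"

definition gmul :: "('g, 'm) monoid_scheme \<Rightarrow> ('g \<Rightarrow> 'k::field) \<Rightarrow> ('g \<Rightarrow> 'k) \<Rightarrow> 'g \<Rightarrow> 'k" where
  "gmul G u v = (\<lambda>z. \<Sum>x\<in>supp u. \<Sum>y\<in>supp v. if x \<otimes>\<^bsub>G\<^esub> y = z then u x * v y else 0)"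

definition lmulA :: "('g \<Rightarrow> 'a \<Rightarrow> 'a) \<Rightarrow> ('g \<Rightarrow> 'k::field) \<Rightarrow> ('a \<Rightarrow> 'k) \<Rightarrow> 'a \<Rightarrow> 'k" where
  "lmulA lact v w = (\<lambda>b. \<Sum>g\<in>supp v. \<Sum>a\<in>supp w. if lact g a = b then v g * w a else 0)"

definition rmulA :: "('a \<Rightarrow> 'g \<Rightarrow> 'a) \<Rightarrow> ('a \<Rightarrow> 'k::field) \<Rightarrow> ('g \<Rightarrow> 'k) \<Rightarrow> 'a \<Rightarrow> 'k" where
  "rmulA ract w v = (\<lambda>b. \<Sum>a\<in>supp w. \<Sum>g\<in>supp v. if ract a g = b then w a * v g else 0)"

definition augI :: "('g, 'm) monoid_scheme \<Rightarrow> ('g \<Rightarrow> 'k::field) set" where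
  "augI G = {u \<in> free (carrier G). (\<Sum>x\<in>supp u. u x) = 0}"

fun IGpow :: "('g, 'm) monoid_scheme \<Rightarrow> nat \<Rightarrow> ('g \<Rightarrow> 'k::field) set" where
  "IGpow G 0 = free (carrier G)"
| "IGpow G (Suc n) = lspan {gmul G u v | u v. u \<in> IGpow G n \<and> v \<in> augI G}"

definition IApow :: "('g, 'm) monoid_scheme \<Rightarrow> 'a set \<Rightarrow> ('g \<Rightarrow> 'a \<Rightarrow> 'a) \<Rightarrow> ('a \<Rightarrow> 'g \<Rightarrow> 'a)
    \<Rightarrow> nat \<Rightarrow> ('a \<Rightarrow> 'k::field) set" where
  "IApow G A lact ract n = lspan {rmulA ract (lmulA lact v1 (delta a)) v2 | v1 v2 a k.
      k \<le> n \<and> a \<in> A \<and> v1 \<in> IGpow G k \<and> v2 \<in> IGpow G (n - k)}"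

text \<open>Ungraded coproduct on k[G] and coaction on k[A] (two components:
 k[A] (x) k[G] and k[G] (x) k[A]).\<close>
definition comulG :: "('g \<Rightarrow> 'k::field) \<Rightarrow> ('g \<times> 'g \<Rightarrow> 'k)" where
  "comulG u = (\<lambda>(g, h). if g = h then u g else 0)"

definition coactAG :: "('a \<Rightarrow> 'g) \<Rightarrow> ('a \<Rightarrow> 'k::field) \<Rightarrow> ('a \<times> 'g \<Rightarrow> 'k)" where
  "coactAG t u = (\<lambda>(a, g). if g = t a then u a else 0)"

definition coactGA :: "('a \<Rightarrow> 'g) \<Rightarrow> ('a \<Rightarrow> 'k::field) \<Rightarrow> ('g \<times> 'a \<Rightarrow> 'k)" where
  "coactGA s u = (\<lambda>(g, a). if g = s a then u a else 0)"

text \<open>A graded vector space gr(V) = (+)_n F^n/F^(n+1) for a decreasing filtration F is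
 represented by the space of representatives
   Rep F = {x : nat x X -> k finitely supported | each degree-n slice lies in F n},
 modulo Zer F = {x | each degree-n slice lies in F (n+1)}.
 A tensor product gr(V) (x) gr(W) is represented by functions on
 (nat x X) x (nat x Y), whose (p,q)-slice lies in F p (x) F' q, modulo those whose
 (p,q)-slice lies in F (p+1) (x) F' q + F p (x) F' (q+1).\<close>

definition slice :: "(nat \<times> 'b \<Rightarrow> 'k) \<Rightarrow> nat \<Rightarrow> 'b \<Rightarrow> 'k" where
  "slice x n = (\<lambda>b. x (n, b))"

definition slice2 :: "((nat \<times> 'b) \<times> (nat \<times> 'c) \<Rightarrow> 'k) \<Rightarrow> nat \<Rightarrow> nat \<Rightarrow> 'b \<times> 'c \<Rightarrow> 'k" where
  "slice2 y p q = (\<lambda>(b, c). y ((p, b), (q, c)))"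

definition grRep :: "(nat \<Rightarrow> ('b \<Rightarrow> 'k::field) set) \<Rightarrow> (nat \<times> 'b \<Rightarrow> 'k) set" where
  "grRep F = {x. finite (supp x) \<and> (\<forall>n. slice x n \<in> F n)}"

definition grZer :: "(nat \<Rightarrow> ('b \<Rightarrow> 'k::field) set) \<Rightarrow> (nat \<times> 'b \<Rightarrow> 'k) set" where
  "grZer F = {x. finite (supp x) \<and> (\<forall>n. slice x n \<in> F (Suc n))}"

definition tRep :: "(nat \<Rightarrow> ('b \<Rightarrow> 'k::field) set) \<Rightarrow> (nat \<Rightarrow> ('c \<Rightarrow> 'k) set)
    \<Rightarrow> ((nat \<times> 'b) \<times> (nat \<times> 'c) \<Rightarrow> 'k) set" where
  "tRep F F' = {y. finite (supp y) \<and> (\<forall>p q. slice2 y p q \<in> tspace (F p) (F' q))}"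

definition tZer :: "(nat \<Rightarrow> ('b \<Rightarrow> 'k::field) set) \<Rightarrow> (nat \<Rightarrow> ('c \<Rightarrow> 'k) set)
    \<Rightarrow> ((nat \<times> 'b) \<times> (nat \<times> 'c) \<Rightarrow> 'k) set" where
  "tZer F F' = {y. finite (supp y) \<and> (\<forall>p q. slice2 y p q \<in>
      lspan (tspace (F (Suc p)) (F' q) \<union> tspace (F p) (F' (Suc q))))}"

definition tFil :: "(nat \<Rightarrow> ('b \<Rightarrow> 'k::field) set) \<Rightarrow> (nat \<Rightarrow> ('c \<Rightarrow> 'k) set)
    \<Rightarrow> nat \<Rightarrow> ('b \<times> 'c \<Rightarrow> 'k) set" where
  "tFil F F' n = lspan (\<Union>p\<in>{0..n}. tspace (F p) (F' (n - p)))"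

text \<open>Induced graded map gr(V) -> gr(V (x) W) of a filtered map f with f(F n) in
 tFil n, via gr(V (x) W) = gr V (x) gr W: y represents the image of the class of x
 iff for every n the sum over p+q=n of the (p,q)-slices of y agrees with f applied to
 the degree-n slice of x modulo tFil (n+1).\<close>
definition induced_rel :: "(nat \<Rightarrow> ('b \<Rightarrow> 'k::field) set) \<Rightarrow> (nat \<Rightarrow> ('c \<Rightarrow> 'k) set)
    \<Rightarrow> (nat \<Rightarrow> ('d \<Rightarrow> 'k) set) \<Rightarrow> (('b \<Rightarrow> 'k) \<Rightarrow> ('c \<times> 'd \<Rightarrow> 'k))
    \<Rightarrow> (nat \<times> 'b \<Rightarrow> 'k) \<Rightarrow> ((nat \<times> 'c) \<times> (nat \<times> 'd) \<Rightarrow> 'k) \<Rightarrow> bool" where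
  "induced_rel F F1 F2 f x y \<longleftrightarrow> y \<in> tRep F1 F2 \<and>
     (\<forall>n. (\<lambda>z. (\<Sum>p\<in>{0..n}. slice2 y p (n - p) z) - f (slice x n) z) \<in> tFil F1 F2 (Suc n))"

text \<open>Subcoalgebras of D(G): represented by subspaces W with Zer \<subseteq> W \<subseteq> Rep whose
 coproduct lands in W (x) W (the span of the x (x) y with x, y in W, plus the zero
 representatives).\<close>
definition DG_subcoalgebra :: "('g, 'm) monoid_scheme \<Rightarrow> (nat \<times> 'g \<Rightarrow> 'k::field) set \<Rightarrow> bool" where
  "DG_subcoalgebra G W \<longleftrightarrow>
     grZer (IGpow G) \<subseteq> W \<and> W \<subseteq> grRep (IGpow G) \<and> lspan W = W \<and>
     (\<forall>x\<in>W. \<exists>y. induced_rel (IGpow G) (IGpow G) (IGpow G) comulG x y \<and>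
        y \<in> lspan ({tens u v | u v. u \<in> W \<and> v \<in> W} \<union> tZer (IGpow G) (IGpow G)))"

definition DG_irreducible :: "'k::field itself \<Rightarrow> ('g, 'm) monoid_scheme \<Rightarrow> bool" where
  "DG_irreducible TYPE('k) G \<longleftrightarrow>
     (\<forall>W1 W2 :: (nat \<times> 'g \<Rightarrow> 'k) set.
        DG_subcoalgebra G W1 \<and> DG_subcoalgebra G W2 \<and>
        W1 \<noteq> grZer (IGpow G) \<and> W2 \<noteq> grZer (IGpow G) \<longrightarrow>
        W1 \<inter> W2 \<noteq> grZer (IGpow G))"

definition DG_cocommutative :: "'k::field itself \<Rightarrow> ('g, 'm) monoid_scheme \<Rightarrow> bool" where
  "DG_cocommutative TYPE('k) G \<longleftrightarrow>
     (\<forall>(x :: nat \<times> 'g \<Rightarrow> 'k) \<in> grRep (IGpow G). \<forall>y.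
        induced_rel (IGpow G) (IGpow G) (IGpow G) comulG x y \<longrightarrow>
        (\<lambda>z. y (prod.swap z)) - y \<in> tZer (IGpow G) (IGpow G))"

text \<open>Delta_1 : D(Q) -> D(Q) (x) D(G) + D(G) (x) D(Q) is invariant under the flip
 D(Q) (x) D(G) + D(G) (x) D(Q) -> D(G) (x) D(Q) + D(Q) (x) D(G).\<close>
definition DQ_cocommutative :: "'k::field itself \<Rightarrow> ('g, 'm) monoid_scheme \<Rightarrow> 'a set
    \<Rightarrow> ('a \<Rightarrow> 'g) \<Rightarrow> ('a \<Rightarrow> 'g) \<Rightarrow> ('g \<Rightarrow> 'a \<Rightarrow> 'a) \<Rightarrow> ('a \<Rightarrow> 'g \<Rightarrow> 'a) \<Rightarrow> bool" where
  "DQ_cocommutative TYPE('k) G A s t lact ract \<longleftrightarrow>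
     (\<forall>(x :: nat \<times> 'a \<Rightarrow> 'k) \<in> grRep (IApow G A lact ract). \<forall>y1 y2.
        induced_rel (IApow G A lact ract) (IApow G A lact ract) (IGpow G) (coactAG t) x y1 \<and>
        induced_rel (IApow G A lact ract) (IGpow G) (IApow G A lact ract) (coactGA s) x y2 \<longrightarrow>
        (\<lambda>z. y2 (prod.swap z)) - y1 \<in> tZer (IApow G A lact ract) (IGpow G) \<and>
        (\<lambda>z. y1 (prod.swap z)) - y2 \<in> tZer (IGpow G) (IApow G A lact ract))"

end

theory Submission
  imports Defs "HOL-Library.Function_Algebras" "HOL.Vector_Spaces"
begin

text \<open>Cocommutativity of
  \<open>\<Delta>\<^sub>0\<close> holds before grading, since \<open>\<Delta>\<^sub>0 g = g \<otimes> g\<close>.  For \<open>\<Delta>\<^sub>1\<close>, the flipped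
  coaction of an arrow \<open>a\<close> differs from the coaction by \<open>a \<otimes> (s a - t a)\<close>, and
  \<open>s a - t a\<close> lies in the augmentation ideal.  The coaction is equivariant for the diagonal
  two-sided action of G on \<open>k[A] \<otimes> k[G]\<close>, which preserves the tensor filtration and is
  trivial on its graded pieces; hence the difference maps \<open>I\<^sup>n(A)\<close> into filtration degree
  \<open>n + 1\<close>, i.e. it vanishes in the associated graded.

  Irreducibility: every nonzero subcoalgebra of \<open>\<D>(G)\<close> contains the class of 1.  Take an
  element whose top homogeneous component \<open>x\<^sub>0\<close> has degree m and contract the second factor
  of its coproduct against a functional that is 1 on \<open>x\<^sub>0\<close> and kills \<open>I\<^sup>m\<^sup>+\<^sup>1(G)\<close>.  The components
  of positive first degree die, and the counit identity \<open>(\<epsilon> \<otimes> id) \<Delta> = id\<close> shows that the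
  component of degree 0 represents 1.\<close>

declare plus_fun_apply[simp del] zero_fun_apply[simp del] times_fun_apply[simp del] one_fun_apply[simp del]
  minus_apply[simp del] uminus_apply[simp del]

lemmas fun_arith_apply = plus_fun_apply zero_fun_apply minus_apply uminus_apply

definition fscale :: "'k::field \<Rightarrow> ('b \<Rightarrow> 'k) \<Rightarrow> 'b \<Rightarrow> 'k" where
  "fscale c f = (\<lambda>x. c * f x)"

lemma fscale_apply: "fscale c f x = c * f x" by (simp add: fscale_def)
lemmas fun_arith_scale_apply = fun_arith_apply fscale_apply

interpretation fun_vs: vector_space "fscale :: 'k::field \<Rightarrow> ('b \<Rightarrow> 'k) \<Rightarrow> 'b \<Rightarrow> 'k"
  by unfold_locales (auto simp: fscale_def fun_eq_iff algebra_simps fun_arith_apply)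

interpretation field_vs: vector_space "(*) :: 'k::field \<Rightarrow> 'k \<Rightarrow> 'k"
  by unfold_locales (auto simp: algebra_simps)

lemma sum_fun_apply: "(\<Sum>u\<in>T. f u) x = (\<Sum>u\<in>T. f u x)"
  by (induction T rule: infinite_finite_induct) (auto simp: fun_arith_apply)

lemma lspan_eq: "lspan S = fun_vs.span S"
  unfolding lspan_def fun_vs.span_explicit
  by (auto simp: sum_fun_apply fscale_def fun_eq_iff)

definition finsupp :: "('b \<Rightarrow> 'k::field) set" where "finsupp = {f. finite (supp f)}"

definition linext :: "('b \<Rightarrow> 'c \<Rightarrow> 'k::field) \<Rightarrow> ('b \<Rightarrow> 'k) \<Rightarrow> 'c \<Rightarrow> 'k" where
  "linext \<phi> u = (\<lambda>z. \<Sum>x\<in>supp u. u x * \<phi> x z)"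

lemma supp_iff[simp]: "x \<in> supp f \<longleftrightarrow> f x \<noteq> 0" by (simp add: supp_def)

lemma finsupp_iff: "f \<in> finsupp \<longleftrightarrow> finite (supp f)" by (simp add: finsupp_def)

lemma supp_add: "supp (u + (v::'b \<Rightarrow> 'k::field)) \<subseteq> supp u \<union> supp v" by (auto simp: supp_def fun_arith_scale_apply)
lemma supp_diff: "supp (u - (v::'b \<Rightarrow> 'k::field)) \<subseteq> supp u \<union> supp v" by (auto simp: supp_def fun_arith_scale_apply)
lemma supp_uminus[simp]: "supp (- (u::'b \<Rightarrow> 'k::field)) = supp u" by (auto simp: supp_def fun_arith_scale_apply)
lemma supp_fscale: "supp (fscale c u) \<subseteq> supp u" by (auto simp: supp_def fun_arith_scale_apply)
lemma supp_zero[simp]: "supp (0::'b \<Rightarrow> 'k::field) = {}" by (auto simp: supp_def fun_arith_scale_apply)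
lemma supp_delta[simp]: "supp (delta x :: 'b \<Rightarrow> 'k::field) = {x}" by (auto simp: supp_def delta_def)

lemma finsupp_add[intro]: "u \<in> finsupp \<Longrightarrow> v \<in> finsupp \<Longrightarrow> u + v \<in> finsupp"
  unfolding finsupp_iff by (meson finite_Un finite_subset supp_add)
lemma finsupp_diff[intro]: "u \<in> finsupp \<Longrightarrow> v \<in> finsupp \<Longrightarrow> u - v \<in> finsupp"
  unfolding finsupp_iff by (meson finite_Un finite_subset supp_diff)
lemma finsupp_fscale[intro]: "u \<in> finsupp \<Longrightarrow> fscale c u \<in> finsupp"
  unfolding finsupp_iff by (meson finite_subset supp_fscale)
lemma finsupp_zero[intro, simp]: "0 \<in> finsupp" unfolding finsupp_iff by simp
lemma finsupp_delta[intro, simp]: "delta x \<in> finsupp" unfolding finsupp_iff by simp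
lemma finsupp_sum[intro]: "(\<And>i. i \<in> I \<Longrightarrow> w i \<in> finsupp) \<Longrightarrow> (\<Sum>i\<in>I. w i) \<in> finsupp"
  by (induction I rule: infinite_finite_induct) auto

lemma finsupp_subspace: "fun_vs.subspace finsupp"
  unfolding fun_vs.subspace_def by auto

lemma linext_superset:
  assumes "finite S" "supp u \<subseteq> S"
  shows "linext \<phi> u = (\<lambda>z. \<Sum>x\<in>S. u x * \<phi> x z)"
  unfolding linext_def
proof
  fix z show "(\<Sum>x\<in>supp u. u x * \<phi> x z) = (\<Sum>x\<in>S. u x * \<phi> x z)"
    by (rule sum.mono_neutral_left) (use assms in auto)
qed

lemma linext_as_sum: "linext \<phi> u = (\<Sum>x\<in>supp u. fscale (u x) (\<phi> x))"
  by (simp add: linext_def fun_eq_iff sum_fun_apply fun_arith_scale_apply)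

lemma linext_add: "u \<in> finsupp \<Longrightarrow> v \<in> finsupp \<Longrightarrow> linext \<phi> (u + v) = linext \<phi> u + linext \<phi> v"
proof -
  assume u: "u \<in> finsupp" and v: "v \<in> finsupp"
  let ?S = "supp u \<union> supp v"
  have f: "finite ?S" using u v by (simp add: finsupp_iff)
  have "linext \<phi> (u + v) = (\<lambda>z. \<Sum>x\<in>?S. (u + v) x * \<phi> x z)"
    by (rule linext_superset[OF f supp_add])
  also have "\<dots> = (\<lambda>z. \<Sum>x\<in>?S. u x * \<phi> x z) + (\<lambda>z. \<Sum>x\<in>?S. v x * \<phi> x z)"
    by (simp add: fun_eq_iff distrib_right sum.distrib fun_arith_scale_apply)
  also have "\<dots> = linext \<phi> u + linext \<phi> v"
    by (subst (1 2) linext_superset[OF f]) auto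
  finally show ?thesis .
qed

lemma linext_fscale: "linext \<phi> (fscale c u) = fscale c (linext \<phi> u)"
proof (cases "c = 0")
  case True
  have "supp (fscale c u) = {}" using True by (simp add: supp_def fun_arith_scale_apply)
  show ?thesis
  proof
    fix z show "linext \<phi> (fscale c u) z = fscale c (linext \<phi> u) z"
      unfolding linext_def fscale_apply \<open>supp (fscale c u) = {}\<close> using True by simp
  qed
next
  case False
  then have e: "supp (fscale c u) = supp u" by (auto simp: supp_def fscale_apply)
  show ?thesis
  proof
    fix z
    have "linext \<phi> (fscale c u) z = (\<Sum>x\<in>supp u. (c * u x) * \<phi> x z)"
      unfolding linext_def e by (simp add: fscale_apply)
    also have "\<dots> = c * (\<Sum>x\<in>supp u. u x * \<phi> x z)"
      unfolding sum_distrib_left mult.assoc ..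
    finally show "linext \<phi> (fscale c u) z = fscale c (linext \<phi> u) z" by (simp add: linext_def fscale_apply)
  qed
qed
lemma linext_zero[simp]: "linext \<phi> 0 = 0" by (simp add: linext_def fun_eq_iff fun_arith_apply)

lemma linext_delta[simp]: "linext \<phi> (delta x) = \<phi> x"
  unfolding linext_def supp_delta by (simp add: delta_def)

lemma linext_finsupp: "u \<in> finsupp \<Longrightarrow> (\<And>x. x \<in> supp u \<Longrightarrow> \<phi> x \<in> finsupp) \<Longrightarrow> linext \<phi> u \<in> finsupp"
  unfolding linext_as_sum by (intro finsupp_sum finsupp_fscale) auto

lemma linext_expand: "u \<in> finsupp \<Longrightarrow> linext delta u = u"
proof -
  assume u: "u \<in> finsupp"
  show ?thesis unfolding linext_def fun_eq_iff delta_def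
  proof
    fix z
    have "(\<Sum>x\<in>supp u. u x * (if z = x then 1 else 0)) = (\<Sum>x\<in>supp u. if x = z then u x else 0)"
      by (rule sum.cong) auto
    also have "\<dots> = u z" using u by (auto simp: finsupp_iff)
    finally show "(\<Sum>x\<in>supp u. u x * (if z = x then 1 else 0)) = u z" .
  qed
qed

definition fs_linear :: "(('b \<Rightarrow> 'k::field) \<Rightarrow> ('c \<Rightarrow> 'k)) \<Rightarrow> bool" where
  "fs_linear L \<longleftrightarrow> (\<forall>u\<in>finsupp. \<forall>v\<in>finsupp. L (u + v) = L u + L v) \<and> (\<forall>u\<in>finsupp. \<forall>c. L (fscale c u) = fscale c (L u))"

lemma fs_linear_linext: "fs_linear (linext \<phi>)" by (simp add: fs_linear_def linext_add linext_fscale)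

lemma fs_linear_zero: "fs_linear L \<Longrightarrow> L 0 = 0"
  unfolding fs_linear_def by (metis finsupp_zero fun_vs.scale_zero_left)

lemma fs_linear_add: "fs_linear L \<Longrightarrow> u \<in> finsupp \<Longrightarrow> v \<in> finsupp \<Longrightarrow> L (u + v) = L u + L v"
  unfolding fs_linear_def by blast

lemma fs_linear_fscale: "fs_linear L \<Longrightarrow> u \<in> finsupp \<Longrightarrow> L (fscale c u) = fscale c (L u)"
  unfolding fs_linear_def by blast

lemma fs_linear_sum_fscale: "fs_linear L \<Longrightarrow> (\<And>i. i \<in> I \<Longrightarrow> w i \<in> finsupp) \<Longrightarrow>
    L (\<Sum>i\<in>I. fscale (c i) (w i)) = (\<Sum>i\<in>I. fscale (c i) (L (w i)))"
proof (induction I rule: infinite_finite_induct)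
  case (insert x F)
  have f1: "fscale (c x) (w x) \<in> finsupp" using insert by auto
  have f2: "(\<Sum>i\<in>F. fscale (c i) (w i)) \<in> finsupp" using insert by (intro finsupp_sum) auto
  have "L (\<Sum>i\<in>insert x F. fscale (c i) (w i)) = L (fscale (c x) (w x) + (\<Sum>i\<in>F. fscale (c i) (w i)))"
    using insert by (intro arg_cong[where f=L] sum.insert) auto
  also have "\<dots> = L (fscale (c x) (w x)) + L (\<Sum>i\<in>F. fscale (c i) (w i))"
    by (rule fs_linear_add[OF insert.prems(1) f1 f2])
  also have "\<dots> = fscale (c x) (L (w x)) + (\<Sum>i\<in>F. fscale (c i) (L (w i)))"
    using insert fs_linear_fscale[OF insert.prems(1)] by auto
  also have "\<dots> = (\<Sum>i\<in>insert x F. fscale (c i) (L (w i)))"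
    using insert by (intro sum.insert[symmetric]) auto
  finally show ?case .
qed (auto simp: fs_linear_zero)

lemma fs_linear_linext_apply: "fs_linear L \<Longrightarrow> u \<in> finsupp \<Longrightarrow> (\<And>x. \<phi> x \<in> finsupp) \<Longrightarrow> L (linext \<phi> u) = linext (\<lambda>x. L (\<phi> x)) u"
  unfolding linext_as_sum by (simp add: fs_linear_sum_fscale)

lemma linext_linext: "u \<in> finsupp \<Longrightarrow> (\<And>x. \<psi> x \<in> finsupp) \<Longrightarrow> linext \<phi> (linext \<psi> u) = linext (\<lambda>x. linext \<phi> (\<psi> x)) u"
  by (rule fs_linear_linext_apply[OF fs_linear_linext])

lemma fs_linear_diff: "fs_linear L \<Longrightarrow> u \<in> finsupp \<Longrightarrow> v \<in> finsupp \<Longrightarrow> L (u - v) = L u - L v"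
proof -
  assume L: "fs_linear L" and u: "u \<in> finsupp" and v: "v \<in> finsupp"
  have "L u = L ((u - v) + v)" by simp
  also have "\<dots> = L (u - v) + L v" by (rule fs_linear_add[OF L finsupp_diff[OF u v] v])
  finally show ?thesis by (simp add: algebra_simps)
qed

lemma fs_linear_span:
  assumes L: "fs_linear L" and S: "S \<subseteq> finsupp" and V: "fun_vs.subspace V" and LS: "\<And>x. x \<in> S \<Longrightarrow> L x \<in> V"
    and x: "x \<in> fun_vs.span S"
  shows "L x \<in> V"
proof -
  have "x \<in> finsupp \<and> L x \<in> V" using x
  proof (induction rule: fun_vs.span_induct_alt)
    case base
    have "L 0 \<in> V" unfolding fs_linear_zero[OF L] by (rule fun_vs.subspace_0[OF V])
    then show ?case using finsupp_zero by blast
  next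
    case (step c x y)
    have xf: "x \<in> finsupp" using S step by auto
    have e: "L (fscale c x + y) = fscale c (L x) + L y" using L xf step by (auto simp: fs_linear_def finsupp_fscale)
    have "fscale c (L x) + L y \<in> V"
      by (rule fun_vs.subspace_add[OF V fun_vs.subspace_scale[OF V LS[OF step(1)]]]) (use step in auto)
    then show ?case using step xf e by auto
  qed
  then show ?thesis by simp
qed

lemma span_finsupp: "S \<subseteq> finsupp \<Longrightarrow> fun_vs.span S \<subseteq> finsupp"
  using fun_vs.span_minimal finsupp_subspace by blast

interpretation fun_vs_pair: vector_space_pair "fscale :: 'k::field \<Rightarrow> ('b \<Rightarrow> 'k) \<Rightarrow> 'b \<Rightarrow> 'k" "fscale :: 'k \<Rightarrow> ('c \<Rightarrow> 'k) \<Rightarrow> 'c \<Rightarrow> 'k"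
  by unfold_locales

interpretation fun_dual_pair: vector_space_pair "fscale :: 'k::field \<Rightarrow> ('b \<Rightarrow> 'k) \<Rightarrow> 'b \<Rightarrow> 'k" "(*) :: 'k \<Rightarrow> 'k \<Rightarrow> 'k"
  by unfold_locales

lemma linear_fs_linear: "Vector_Spaces.linear fscale fscale L \<Longrightarrow> fs_linear L"
  unfolding fs_linear_def linear_iff by auto

lemma linext_fun_cong: "(\<And>x. x \<in> supp u \<Longrightarrow> \<phi> x = \<psi> x) \<Longrightarrow> linext \<phi> u = linext \<psi> u"
  unfolding linext_def by (intro ext sum.cong) auto

lemma tens_apply: "tens u v (x, y) = u x * v y" by (simp add: tens_def)

lemma supp_tens: "supp (tens u v) = supp u \<times> supp (v::'c \<Rightarrow> 'k::field)"
  by (auto simp: supp_def tens_def)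

lemma finsupp_tens[intro]: "u \<in> finsupp \<Longrightarrow> v \<in> finsupp \<Longrightarrow> tens u v \<in> finsupp"
  unfolding finsupp_iff supp_tens by simp

lemma tens_add2: "tens u (v + v') = tens u v + tens u v'"
  by (simp add: tens_def fun_eq_iff fun_arith_apply distrib_left split: prod.split)
lemma tens_diff1: "tens (u - u') v = tens u v - tens u' v"
  by (simp add: tens_def fun_eq_iff fun_arith_apply left_diff_distrib split: prod.split)
lemma tens_diff2: "tens u (v - v') = tens u v - tens u v'"
  by (simp add: tens_def fun_eq_iff fun_arith_apply right_diff_distrib split: prod.split)
lemma tens_sc1: "tens (fscale c u) v = fscale c (tens u v)"
  by (rule ext, clarify) (simp only: tens_apply fscale_apply mult.assoc)
lemma tens_sc2: "tens u (fscale c v) = fscale c (tens u v)"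
  by (rule ext, clarify) (simp only: tens_apply fscale_apply mult.left_commute)
lemma tens_zero1[simp]: "tens 0 v = 0"
  by (simp add: tens_def fun_eq_iff fun_arith_apply split: prod.split)
lemma tens_zero2[simp]: "tens u 0 = 0"
  by (simp add: tens_def fun_eq_iff fun_arith_apply split: prod.split)

lemma tens_linext: "tens (linext \<alpha> u) (linext \<beta> v) = linext (\<lambda>x. linext (\<lambda>y. tens (\<alpha> x) (\<beta> y)) v) u"
proof (rule ext, clarify)
  fix a b
  show "tens (linext \<alpha> u) (linext \<beta> v) (a, b) = linext (\<lambda>x. linext (\<lambda>y. tens (\<alpha> x) (\<beta> y)) v) u (a, b)"
    unfolding tens_apply linext_def
    apply (simp only: sum_product)
    apply (intro sum.cong refl)
    apply (simp only: sum_distrib_left)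
    apply (intro sum.cong refl)
    apply (simp only: ac_simps)
    done
qed

lemma tens_delta: "tens (delta x) (delta y) = (delta (x, y) :: _ \<Rightarrow> 'k::field)"
  by (rule ext, clarify) (simp add: tens_apply delta_def)

lemma tens_as_linext: "u \<in> finsupp \<Longrightarrow> v \<in> finsupp \<Longrightarrow> tens u v = linext (\<lambda>x. linext (\<lambda>y. delta (x, y)) v) u"
proof -
  assume u: "u \<in> finsupp" and v: "v \<in> finsupp"
  have "tens u v = tens (linext delta u) (linext delta v)" using u v by (simp add: linext_expand)
  also have "\<dots> = linext (\<lambda>x. linext (\<lambda>y. tens (delta x) (delta y)) v) u" by (rule tens_linext)
  also have "\<dots> = linext (\<lambda>x. linext (\<lambda>y. delta (x, y)) v) u"
    by (simp only: tens_delta)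
  finally show ?thesis .
qed

lemma tspace_subspace: "fun_vs.subspace (tspace U V)"
  unfolding tspace_def lspan_eq by simp

lemma tens_in_tspace: "u \<in> U \<Longrightarrow> v \<in> V \<Longrightarrow> tens u v \<in> tspace U V"
  unfolding tspace_def lspan_eq by (rule fun_vs.span_base) blast

lemma tspace_finsupp: "U \<subseteq> finsupp \<Longrightarrow> V \<subseteq> finsupp \<Longrightarrow> tspace U V \<subseteq> finsupp"
  unfolding tspace_def lspan_eq by (rule span_finsupp) auto


lemma tspace_map:
  assumes L: "fs_linear L" and U: "U \<subseteq> finsupp" and V: "V \<subseteq> finsupp" and W: "fun_vs.subspace W"
    and gen: "\<And>u v. u \<in> U \<Longrightarrow> v \<in> V \<Longrightarrow> L (tens u v) \<in> W"
    and w: "w \<in> tspace U V"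
  shows "L w \<in> W"
proof (rule fs_linear_span[OF L _ W])
  show "{tens u v |u v. u \<in> U \<and> v \<in> V} \<subseteq> finsupp" using U V by auto
  show "w \<in> fun_vs.span {tens u v |u v. u \<in> U \<and> v \<in> V}" using w unfolding tspace_def lspan_eq .
qed (use gen in auto)

definition tensor_map :: "(('b \<Rightarrow> 'k::field) \<Rightarrow> ('b \<Rightarrow> 'k)) \<Rightarrow> (('c \<Rightarrow> 'k) \<Rightarrow> ('c \<Rightarrow> 'k))
   \<Rightarrow> ('b \<times> 'c \<Rightarrow> 'k) \<Rightarrow> ('b \<times> 'c \<Rightarrow> 'k)" where
  "tensor_map \<pi> \<pi>' = linext (\<lambda>xy. tens (\<pi> (delta (fst xy))) (\<pi>' (delta (snd xy))))"

lemma fs_linear_apply_linext: "fs_linear L \<Longrightarrow> u \<in> finsupp \<Longrightarrow> L u = linext (\<lambda>x. L (delta x)) u"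
  using fs_linear_linext_apply[of L u delta] by (simp add: linext_expand)

lemma tensor_map_tens:
  assumes p: "fs_linear \<pi>" and p': "fs_linear \<pi>'" and u: "u \<in> finsupp" and v: "v \<in> finsupp"
  shows "tensor_map \<pi> \<pi>' (tens u v) = tens (\<pi> u) (\<pi>' v)"
proof -
  have "tensor_map \<pi> \<pi>' (tens u v) = linext (\<lambda>x. tensor_map \<pi> \<pi>' (linext (\<lambda>y. delta (x, y)) v)) u"
    unfolding tens_as_linext[OF u v] tensor_map_def by (rule linext_linext[OF u]) (use v in \<open>auto intro!: linext_finsupp\<close>)
  also have "\<dots> = linext (\<lambda>x. linext (\<lambda>y. tens (\<pi> (delta x)) (\<pi>' (delta y))) v) u"
    unfolding tensor_map_def by (intro linext_fun_cong, subst linext_linext[OF v]) auto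
  also have "\<dots> = tens (linext (\<lambda>x. \<pi> (delta x)) u) (linext (\<lambda>y. \<pi>' (delta y)) v)"
    by (rule tens_linext[symmetric])
  also have "\<dots> = tens (\<pi> u) (\<pi>' v)"
    using fs_linear_apply_linext[OF p u] fs_linear_apply_linext[OF p' v] by simp
  finally show ?thesis .
qed

section \<open>Filtrations and the bigrading of tensor products\<close>


lemma complement_projection:
  fixes A B :: "('b \<Rightarrow> 'k::field) set"
  assumes A: "fun_vs.subspace A" and B: "fun_vs.subspace B" and BA: "B \<subseteq> A"
  obtains \<pi> :: "('b \<Rightarrow> 'k) \<Rightarrow> ('b \<Rightarrow> 'k)" where "Vector_Spaces.linear fscale fscale \<pi>"
    "\<And>u. u \<in> B \<Longrightarrow> \<pi> u = 0" "\<And>u. u \<in> A \<Longrightarrow> \<pi> u \<in> A" "\<And>u. u \<in> A \<Longrightarrow> u - \<pi> u \<in> B"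
proof -
  obtain B1 where B1: "B1 \<subseteq> B" "fun_vs.independent B1" "B \<subseteq> fun_vs.span B1"
    by (rule fun_vs.maximal_independent_subset)
  obtain B2 where B2: "B1 \<subseteq> B2" "B2 \<subseteq> A" "fun_vs.independent B2" "A \<subseteq> fun_vs.span B2"
    by (rule fun_vs.maximal_independent_subset_extend[of B1 A]) (use B1 BA in auto)
  have span1: "fun_vs.span B1 = B" by (rule fun_vs.span_subspace[OF B1(1,3) B])
  have span2: "fun_vs.span B2 = A" by (rule fun_vs.span_subspace[OF B2(2,4) A])
  define \<pi> :: "('b \<Rightarrow> 'k) \<Rightarrow> ('b \<Rightarrow> 'k)" where
    "\<pi> = fun_vs_pair.construct B2 (\<lambda>b. if b \<in> B1 then 0 else b)"
  have lin_pi: "Vector_Spaces.linear fscale fscale \<pi>"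
    unfolding \<pi>_def by (rule fun_vs_pair.linear_construct[OF B2(3)])
  have pb: "\<pi> b = (if b \<in> B1 then 0 else b)" if "b \<in> B2" for b
    unfolding \<pi>_def by (rule fun_vs_pair.construct_basis[OF B2(3) that])
  have kill: "\<pi> u = 0" if "u \<in> B" for u
  proof (rule fun_vs_pair.linear_eq_0_on_span[OF lin_pi])
    show "u \<in> fun_vs.span B1" using that span1 by simp
  next
    fix b assume "b \<in> B1"
    then show "\<pi> b = 0" using pb[of b] B2(1) by auto
  qed
  have "B2 \<subseteq> {u. \<pi> u \<in> A}"
  proof
    fix b assume "b \<in> B2"
    then show "b \<in> {u. \<pi> u \<in> A}" using pb[of b] B2(2) fun_vs.subspace_0[OF A] by auto
  qed
  then have "fun_vs.span B2 \<subseteq> {u. \<pi> u \<in> A}"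
    by (rule fun_vs.span_minimal[OF _ fun_vs_pair.linear_subspace_linear_preimage[OF lin_pi A]])
  then have range: "A \<subseteq> {u. \<pi> u \<in> A}" unfolding span2 .
  have lin_res: "Vector_Spaces.linear fscale fscale (\<lambda>u. u - \<pi> u)"
    using fun_vs_pair.linear_compose_sub[OF fun_vs.linear_id lin_pi] by (simp add: id_def)
  have "B2 \<subseteq> {u. u - \<pi> u \<in> B}"
  proof
    fix b assume "b \<in> B2"
    then show "b \<in> {u. u - \<pi> u \<in> B}" using pb[of b] B1(1) fun_vs.subspace_0[OF B] by auto
  qed
  then have "fun_vs.span B2 \<subseteq> {u. u - \<pi> u \<in> B}"
    by (rule fun_vs.span_minimal[OF _ fun_vs_pair.linear_subspace_linear_preimage[OF lin_res B]])
  then have residual: "A \<subseteq> {u. u - \<pi> u \<in> B}" unfolding span2 .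
  show ?thesis by (rule that[OF lin_pi kill]) (use range residual in blast)+
qed

definition filtration :: "(nat \<Rightarrow> ('b \<Rightarrow> 'k::field) set) \<Rightarrow> bool" where
  "filtration F \<longleftrightarrow> (\<forall>p. fun_vs.subspace (F p) \<and> F (Suc p) \<subseteq> F p \<and> F p \<subseteq> finsupp)"

lemma filtration_subspace: "filtration F \<Longrightarrow> fun_vs.subspace (F p)" unfolding filtration_def by blast
lemma filtration_finsupp: "filtration F \<Longrightarrow> F p \<subseteq> finsupp" unfolding filtration_def by blast
lemma filtration_antimono: assumes "filtration F" "p \<le> q" shows "F q \<subseteq> F p"
  using assms(2)
proof (induction q rule: dec_induct)
  case (step q) then show ?case using assms(1) unfolding filtration_def by blast
qed auto

lemma tens_in_tFil: "p \<le> j \<Longrightarrow> u \<in> F p \<Longrightarrow> w \<in> F' (j - p) \<Longrightarrow> tens u w \<in> tFil F F' j"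
  unfolding tFil_def lspan_eq by (intro fun_vs.span_base UN_I[of p]) (auto intro: tens_in_tspace)

lemma tFil_map:
  assumes F: "filtration F" and F': "filtration F'" and L: "fs_linear L" and V: "fun_vs.subspace V" and X: "X \<in> tFil F F' j"
    and gen: "\<And>p u w. p \<le> j \<Longrightarrow> u \<in> F p \<Longrightarrow> w \<in> F' (j - p) \<Longrightarrow> L (tens u w) \<in> V"
  shows "L X \<in> V"
proof (rule fs_linear_span[OF L _ V])
  show "X \<in> fun_vs.span (\<Union>p\<in>{0..j}. tspace (F p) (F' (j - p)))" using X unfolding tFil_def lspan_eq .
  show "(\<Union>p\<in>{0..j}. tspace (F p) (F' (j - p))) \<subseteq> finsupp"
    using tspace_finsupp[OF filtration_finsupp[OF F] filtration_finsupp[OF F']] by blast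
  fix x assume "x \<in> (\<Union>p\<in>{0..j}. tspace (F p) (F' (j - p)))"
  then obtain p where p: "p \<le> j" "x \<in> tspace (F p) (F' (j - p))" by auto
  show "L x \<in> V"
    by (rule tspace_map[OF L filtration_finsupp[OF F] filtration_finsupp[OF F'] V _ p(2)]) (use gen p(1) in auto)
qed

lemma fs_linear_id: "fs_linear (\<lambda>w. w)" by (simp add: fs_linear_def)
lemma fs_linear_minus: "fs_linear L1 \<Longrightarrow> fs_linear L2 \<Longrightarrow> fs_linear (\<lambda>w. L1 w - L2 w)"
  unfolding fs_linear_def by (simp add: algebra_simps fun_vs.scale_right_diff_distrib)

lemma fs_linear_sum: "fs_linear L \<Longrightarrow> (\<And>i. i \<in> I \<Longrightarrow> w i \<in> finsupp) \<Longrightarrow> L (\<Sum>i\<in>I. w i) = (\<Sum>i\<in>I. L (w i))"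
  using fs_linear_sum_fscale[of L I w "\<lambda>_. 1"] by simp

lemma tens_sub_split: "tens u v - tens a b = tens (u - a) v + tens a (v - b)"
  by (simp add: tens_diff1 tens_diff2)

lemma tensor_map_vanishes:
  assumes p: "fs_linear \<pi>" and p': "fs_linear \<pi>'" and U: "U \<subseteq> finsupp" and V: "V \<subseteq> finsupp"
    and k: "(\<forall>u\<in>U. \<pi> u = 0) \<or> (\<forall>v\<in>V. \<pi>' v = 0)" and w: "w \<in> tspace U V"
  shows "tensor_map \<pi> \<pi>' w = 0"
proof -
  have "tensor_map \<pi> \<pi>' w \<in> {0}"
  proof (rule tspace_map[OF _ U V fun_vs.subspace_single_0 _ w])
    show "fs_linear (tensor_map \<pi> \<pi>')" unfolding tensor_map_def by (rule fs_linear_linext)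
    fix u v assume uv: "u \<in> U" "v \<in> V"
    have uf: "u \<in> finsupp" and vf: "v \<in> finsupp" using uv U V by auto
    show "tensor_map \<pi> \<pi>' (tens u v) \<in> {0}" using k uv by (auto simp: tensor_map_tens[OF p p' uf vf])
  qed
  then show ?thesis by simp
qed

definition complement_proj :: "(nat \<Rightarrow> ('b \<Rightarrow> 'k::field) set) \<Rightarrow> nat \<Rightarrow> (('b \<Rightarrow> 'k) \<Rightarrow> ('b \<Rightarrow> 'k)) \<Rightarrow> bool" where
  "complement_proj F p \<pi> \<longleftrightarrow> Vector_Spaces.linear fscale fscale \<pi> \<and> (\<forall>u\<in>F (Suc p). \<pi> u = 0) \<and>
     (\<forall>u\<in>F p. \<pi> u \<in> F p \<and> u - \<pi> u \<in> F (Suc p))"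

lemma complement_proj_exists:
  assumes "filtration F"
  obtains \<pi> where "complement_proj F p \<pi>"
proof -
  obtain \<pi> where "Vector_Spaces.linear fscale fscale \<pi>" "\<And>u. u \<in> F (Suc p) \<Longrightarrow> \<pi> u = 0"
    "\<And>u. u \<in> F p \<Longrightarrow> \<pi> u \<in> F p" "\<And>u. u \<in> F p \<Longrightarrow> u - \<pi> u \<in> F (Suc p)"
    by (rule complement_projection[of "F p" "F (Suc p)"]) (use assms in \<open>auto simp: filtration_def\<close>)
  then show ?thesis by (intro that[of \<pi>]) (simp add: complement_proj_def)
qed

lemma fs_linear_complement_proj: "complement_proj F p \<pi> \<Longrightarrow> fs_linear \<pi>"
  by (auto simp: complement_proj_def intro: linear_fs_linear)

lemma tensor_map_complement_proj_vanishes: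
  assumes F: "filtration F" and F': "filtration F'"
    and \<pi>: "complement_proj F p \<pi>" and \<pi>': "complement_proj F' q \<pi>'"
    and w: "w \<in> tspace (F a) (F' b)" and ab: "Suc p \<le> a \<or> Suc q \<le> b"
  shows "tensor_map \<pi> \<pi>' w = 0"
proof (rule tensor_map_vanishes[OF fs_linear_complement_proj[OF \<pi>] fs_linear_complement_proj[OF \<pi>']
      filtration_finsupp[OF F] filtration_finsupp[OF F'] _ w])
  show "(\<forall>u\<in>F a. \<pi> u = 0) \<or> (\<forall>v\<in>F' b. \<pi>' v = 0)"
    using ab filtration_antimono[OF F, of "Suc p" a] filtration_antimono[OF F', of "Suc q" b] \<pi> \<pi>'
    by (auto simp: complement_proj_def)
qed

lemma tensor_map_complement_proj_tFil:
  assumes F: "filtration F" and F': "filtration F'"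
    and \<pi>: "complement_proj F p \<pi>" and \<pi>': "complement_proj F' q \<pi>'"
    and w: "w \<in> tFil F F' (Suc (p + q))"
  shows "tensor_map \<pi> \<pi>' w = 0"
proof -
  have "tensor_map \<pi> \<pi>' w \<in> {0}"
  proof (rule tFil_map[OF F F' _ fun_vs.subspace_single_0 w])
    show "fs_linear (tensor_map \<pi> \<pi>')" unfolding tensor_map_def by (rule fs_linear_linext)
    fix a u v assume "a \<le> Suc (p + q)" "u \<in> F a" "v \<in> F' (Suc (p + q) - a)"
    moreover have "Suc p \<le> a \<or> Suc q \<le> Suc (p + q) - a" by linarith
    ultimately show "tensor_map \<pi> \<pi>' (tens u v) \<in> {0}"
      using tensor_map_complement_proj_vanishes[OF F F' \<pi> \<pi>' tens_in_tspace] by blast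
  qed
  then show ?thesis by simp
qed

lemma tensor_map_complement_proj_residual:
  assumes F: "filtration F" and F': "filtration F'"
    and \<pi>: "complement_proj F p \<pi>" and \<pi>': "complement_proj F' q \<pi>'"
    and w: "w \<in> tspace (F p) (F' q)"
  shows "w - tensor_map \<pi> \<pi>' w \<in> lspan (tspace (F (Suc p)) (F' q) \<union> tspace (F p) (F' (Suc q)))"
  unfolding lspan_eq
proof (rule tspace_map[OF fs_linear_minus[OF fs_linear_id] filtration_finsupp[OF F] filtration_finsupp[OF F'] _ _ w])
  show "fs_linear (tensor_map \<pi> \<pi>')" unfolding tensor_map_def by (rule fs_linear_linext)
  fix u v assume u: "u \<in> F p" and v: "v \<in> F' q"
  have uf: "u \<in> finsupp" and vf: "v \<in> finsupp" using u v filtration_finsupp[OF F] filtration_finsupp[OF F'] by auto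
  have e: "tens u v - tensor_map \<pi> \<pi>' (tens u v) = tens (u - \<pi> u) v + tens (\<pi> u) (v - \<pi>' v)"
    unfolding tensor_map_tens[OF fs_linear_complement_proj[OF \<pi>] fs_linear_complement_proj[OF \<pi>'] uf vf]
    by (rule tens_sub_split)
  have "tens (u - \<pi> u) v \<in> tspace (F (Suc p)) (F' q)" "tens (\<pi> u) (v - \<pi>' v) \<in> tspace (F p) (F' (Suc q))"
    using u v \<pi> \<pi>' by (auto simp: complement_proj_def intro!: tens_in_tspace)
  then show "tens u v - tensor_map \<pi> \<pi>' (tens u v)
      \<in> fun_vs.span (tspace (F (Suc p)) (F' q) \<union> tspace (F p) (F' (Suc q)))"
    unfolding e by (intro fun_vs.span_add fun_vs.span_base) auto
qed simp

text \<open>Tensoring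
  complements of F (p+1) in F p and of F' (q+1) in F' q isolates the (p, q) component.\<close>

lemma component_of_tFil_sum:
  assumes F: "filtration F" and F': "filtration F'"
    and d: "\<And>p. p \<le> n \<Longrightarrow> d p \<in> tspace (F p) (F' (n - p))"
    and S: "(\<Sum>p\<in>{0..n}. d p) \<in> tFil F F' (Suc n)"
    and p: "p \<le> n"
  shows "d p \<in> lspan (tspace (F (Suc p)) (F' (n - p)) \<union> tspace (F p) (F' (Suc (n - p))))"
proof -
  define q where "q = n - p"
  obtain \<pi> \<pi>' where \<pi>: "complement_proj F p \<pi>" and \<pi>': "complement_proj F' q \<pi>'"
    using complement_proj_exists[OF F] complement_proj_exists[OF F'] by metis
  let ?T = "tensor_map \<pi> \<pi>'"
  have "?T (\<Sum>p'\<in>{0..n}. d p') = (\<Sum>p'\<in>{0..n}. ?T (d p'))"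
    using d tspace_finsupp[OF filtration_finsupp[OF F] filtration_finsupp[OF F']]
    by (intro fs_linear_sum) (auto simp: tensor_map_def intro: fs_linear_linext)
  also have "\<dots> = (\<Sum>p'\<in>{p}. ?T (d p'))"
  proof (rule sum.mono_neutral_right)
    show "\<forall>p'\<in>{0..n} - {p}. ?T (d p') = 0"
    proof
      fix p' assume "p' \<in> {0..n} - {p}"
      then have "p' \<le> n" "Suc p \<le> p' \<or> Suc q \<le> n - p'" using q_def p by auto
      then show "?T (d p') = 0" using tensor_map_complement_proj_vanishes[OF F F' \<pi> \<pi>' d] by blast
    qed
  qed (use p in auto)
  finally have "?T (d p) = 0"
    using tensor_map_complement_proj_tFil[OF F F' \<pi> \<pi>'] S p by (simp add: q_def)
  then show ?thesis
    using tensor_map_complement_proj_residual[OF F F' \<pi> \<pi>' d[OF p, folded q_def]] by (simp add: q_def)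
qed

definition tswap :: "('b \<times> 'c \<Rightarrow> 'k) \<Rightarrow> ('c \<times> 'b \<Rightarrow> 'k)" where
  "tswap w = (\<lambda>z. w (prod.swap z))"

lemma tswap_tens: "tswap (tens u v) = tens v u"
  by (rule ext, clarify) (simp add: tswap_def tens_apply mult.commute)

lemma tswap_add: "tswap (u + v) = tswap u + tswap v"
  by (simp add: tswap_def plus_fun_def)
lemma tswap_diff: "tswap (u - v) = tswap u - tswap v"
  by (simp add: tswap_def fun_eq_iff minus_apply)
lemma tswap_fscale: "tswap (fscale c u) = fscale c (tswap u)"
  by (simp add: tswap_def fscale_def)
lemma tswap_zero[simp]: "tswap 0 = 0" by (simp add: tswap_def zero_fun_def)
lemma tswap_sum: "tswap (\<Sum>i\<in>I. w i) = (\<Sum>i\<in>I. tswap (w i))"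
  by (induction I rule: infinite_finite_induct) (simp_all add: tswap_add)
lemma tswap_tswap[simp]: "tswap (tswap w) = w"
  by (simp add: tswap_def)

lemma fs_linear_tswap: "fs_linear tswap" by (simp add: fs_linear_def tswap_add tswap_fscale)

lemma supp_tswap: "supp (tswap w) = prod.swap ` supp w"
  by (force simp: tswap_def supp_def)

lemma finsupp_tswap[intro]: "w \<in> finsupp \<Longrightarrow> tswap w \<in> finsupp"
  by (simp add: finsupp_iff supp_tswap)

lemma tswap_tspace:
  assumes "U \<subseteq> finsupp" "V \<subseteq> finsupp" "w \<in> tspace U V"
  shows "tswap w \<in> tspace V U"
  by (rule tspace_map[OF fs_linear_tswap assms(1,2) tspace_subspace _ assms(3)])
     (simp add: tswap_tens tens_in_tspace)


lemma tswap_tFil: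
  assumes F: "filtration F" and F': "filtration F'" and w: "w \<in> tFil F F' n"
  shows "tswap w \<in> tFil F' F n"
proof -
  have "tswap w \<in> fun_vs.span (\<Union>p\<in>{0..n}. tspace (F' p) (F (n - p)))"
  proof (rule fs_linear_span[OF fs_linear_tswap _ fun_vs.subspace_span])
    show "w \<in> fun_vs.span (\<Union>p\<in>{0..n}. tspace (F p) (F' (n - p)))" using w unfolding tFil_def lspan_eq .
    show "(\<Union>p\<in>{0..n}. tspace (F p) (F' (n - p))) \<subseteq> finsupp"
      using tspace_finsupp[OF filtration_finsupp[OF F] filtration_finsupp[OF F']] by blast
    fix x assume "x \<in> (\<Union>p\<in>{0..n}. tspace (F p) (F' (n - p)))"
    then obtain p where p: "p \<le> n" "x \<in> tspace (F p) (F' (n - p))" by auto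
    have "tswap x \<in> tspace (F' (n - p)) (F (n - (n - p)))"
      using tswap_tspace[OF filtration_finsupp[OF F] filtration_finsupp[OF F'] p(2)] p(1) by simp
    then show "tswap x \<in> fun_vs.span (\<Union>p\<in>{0..n}. tspace (F' p) (F (n - p)))"
      using p(1) by (intro fun_vs.span_base UN_I[of "n - p"]) auto
  qed
  then show ?thesis unfolding tFil_def lspan_eq .
qed

lemma slice2_tswap: "slice2 (tswap y) p q = tswap (slice2 y q p)"
  by (simp add: slice2_def tswap_def fun_eq_iff split: prod.split)

lemma slice2_diff: "slice2 (y - y') p q = slice2 y p q - slice2 y' p q"
  by (simp add: slice2_def fun_eq_iff minus_apply split: prod.split)


lemma induced_rel_sum:
  assumes "induced_rel F F1 F2 f x y"
  shows "(\<Sum>p\<in>{0..n}. slice2 y p (n - p)) - f (slice x n) \<in> tFil F1 F2 (Suc n)"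
proof -
  have "(\<Sum>p\<in>{0..n}. slice2 y p (n - p)) - f (slice x n)
      = (\<lambda>z. (\<Sum>p\<in>{0..n}. slice2 y p (n - p) z) - f (slice x n) z)"
    by (rule ext) (simp add: minus_apply sum_fun_apply)
  then show ?thesis using assms unfolding induced_rel_def by simp
qed

lemma tFil_subspace: "fun_vs.subspace (tFil F F' n)"
  unfolding tFil_def lspan_eq by simp

lemma tRep_finsupp: "y \<in> tRep F F' \<Longrightarrow> y \<in> finsupp"
  by (simp add: tRep_def finsupp_iff)

lemma tRep_slice: "y \<in> tRep F F' \<Longrightarrow> slice2 y p q \<in> tspace (F p) (F' q)"
  by (simp add: tRep_def)

lemma tZer_of_diagonal_sums:
  assumes F: "filtration F" and F': "filtration F'" and yf: "y \<in> finsupp"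
    and ys: "\<And>p q. slice2 y p q \<in> tspace (F p) (F' q)"
    and S: "\<And>n. (\<Sum>p\<in>{0..n}. slice2 y p (n - p)) \<in> tFil F F' (Suc n)"
  shows "y \<in> tZer F F'"
proof -
  have "slice2 y p q \<in> lspan (tspace (F (Suc p)) (F' q) \<union> tspace (F p) (F' (Suc q)))" for p q
    using component_of_tFil_sum[OF F F', of "p + q" "\<lambda>p'. slice2 y p' (p + q - p')" p] ys S[of "p + q"] by simp
  then show ?thesis using yf unfolding tZer_def finsupp_iff by blast
qed

lemma tswap_induced_diff_tZer:
  assumes F: "filtration F" and F': "filtration F'"
    and r1: "induced_rel Fx F F' f1 x y1" and r2: "induced_rel Fx F' F f2 x y2"
    and c: "\<And>n. tswap (f2 (slice x n)) - f1 (slice x n) \<in> tFil F F' (Suc n)"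
  shows "tswap y2 - y1 \<in> tZer F F'"
proof (rule tZer_of_diagonal_sums[OF F F'])
  have y1: "y1 \<in> tRep F F'" and y2: "y2 \<in> tRep F' F" using r1 r2 by (auto simp: induced_rel_def)
  show "tswap y2 - y1 \<in> finsupp" using tRep_finsupp[OF y1] tRep_finsupp[OF y2] by auto
  fix p q
  show "slice2 (tswap y2 - y1) p q \<in> tspace (F p) (F' q)"
    unfolding slice2_diff slice2_tswap
    by (rule fun_vs.subspace_diff[OF tspace_subspace]) 
       (auto intro!: tswap_tspace filtration_finsupp F F' tRep_slice[OF y2] tRep_slice[OF y1])
next
  fix n
  have y2: "y2 \<in> tRep F' F" using r2 by (auto simp: induced_rel_def)
  let ?S1 = "\<Sum>p\<in>{0..n}. slice2 y1 p (n - p)"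
  let ?S2 = "\<Sum>p\<in>{0..n}. slice2 y2 p (n - p)"
  have e: "(\<Sum>p\<in>{0..n}. slice2 (tswap y2 - y1) p (n - p)) = tswap ?S2 - ?S1"
  proof -
    have "(\<Sum>p\<in>{0..n}. slice2 (tswap y2 - y1) p (n - p))
        = (\<Sum>p\<in>{0..n}. tswap (slice2 y2 (n - p) p)) - ?S1"
      unfolding slice2_diff slice2_tswap by (simp add: sum_subtractf)
    also have "(\<Sum>p\<in>{0..n}. tswap (slice2 y2 (n - p) p)) = (\<Sum>p\<in>{0..n}. tswap (slice2 y2 p (n - p)))"
      by (subst sum.atLeastAtMost_rev) (intro sum.cong, auto)
    finally show ?thesis by (simp add: tswap_sum)
  qed
  have a: "tswap (?S2 - f2 (slice x n)) \<in> tFil F F' (Suc n)"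
    by (rule tswap_tFil[OF F' F induced_rel_sum[OF r2]])
  have b: "?S1 - f1 (slice x n) \<in> tFil F F' (Suc n)" by (rule induced_rel_sum[OF r1])
  have "tswap ?S2 - ?S1 = (tswap (?S2 - f2 (slice x n)) + (tswap (f2 (slice x n)) - f1 (slice x n)))
        - (?S1 - f1 (slice x n))"
    by (simp add: tswap_diff algebra_simps)
  also have "\<dots> \<in> tFil F F' (Suc n)"
    by (intro fun_vs.subspace_diff[OF tFil_subspace] fun_vs.subspace_add[OF tFil_subspace] a b c)
  finally show "(\<Sum>p\<in>{0..n}. slice2 (tswap y2 - y1) p (n - p)) \<in> tFil F F' (Suc n)" unfolding e .
qed

lemma supp_linext: "supp (linext \<phi> u) \<subseteq> (\<Union>x\<in>supp u. supp (\<phi> x))"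
proof
  fix z assume z: "z \<in> supp (linext \<phi> u)"
  show "z \<in> (\<Union>x\<in>supp u. supp (\<phi> x))"
  proof (rule ccontr)
    assume "z \<notin> (\<Union>x\<in>supp u. supp (\<phi> x))"
    then have "\<forall>x\<in>supp u. \<phi> x z = 0" by auto
    then have "linext \<phi> u z = 0" unfolding linext_def by simp
    then show False using z by simp
  qed
qed

lemma free_finsupp: "free X \<subseteq> finsupp" by (auto simp: free_def finsupp_iff)

lemma free_subspace: "fun_vs.subspace (free X)"
  unfolding fun_vs.subspace_def free_def
  by (auto intro: finite_subset[OF supp_add] finite_subset[OF supp_fscale]
      dest: subsetD[OF supp_add] subsetD[OF supp_fscale])

lemma delta_free: "x \<in> X \<Longrightarrow> (delta x :: _ \<Rightarrow> 'k::field) \<in> free X" by (simp add: free_def)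

lemma linext_free: "u \<in> finsupp \<Longrightarrow> (\<And>x. x \<in> supp u \<Longrightarrow> \<phi> x \<in> free X) \<Longrightarrow> linext \<phi> u \<in> free X"
proof -
  assume u: "u \<in> finsupp" and ph: "\<And>x. x \<in> supp u \<Longrightarrow> \<phi> x \<in> free X"
  have "linext \<phi> u \<in> finsupp" using u ph free_finsupp by (intro linext_finsupp) auto
  moreover have "supp (linext \<phi> u) \<subseteq> X" using supp_linext[of \<phi> u] ph by (fastforce simp: free_def)
  ultimately show ?thesis by (simp add: free_def finsupp_iff)
qed

lemma gmul_as_linext: "gmul G u v = linext (\<lambda>x. linext (\<lambda>y. delta (x \<otimes>\<^bsub>G\<^esub> y)) v) u"
  unfolding gmul_def linext_def sum_distrib_left
  by (rule ext, intro sum.cong refl) (auto simp: delta_def)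

lemma gmul_as_linext2: "gmul G u v = linext (\<lambda>y. linext (\<lambda>x. delta (x \<otimes>\<^bsub>G\<^esub> y)) u) v"
  unfolding gmul_def linext_def sum_distrib_left
  by (rule ext, subst sum.swap, intro sum.cong refl) (auto simp: delta_def mult.commute)

lemma fs_linear_gmul1: "fs_linear (\<lambda>u. gmul G u v)" unfolding gmul_as_linext by (rule fs_linear_linext)
lemma fs_linear_gmul2: "fs_linear (\<lambda>v. gmul G u v)" unfolding gmul_as_linext2 by (rule fs_linear_linext)


definition augmentation :: "('b \<Rightarrow> 'k::field) \<Rightarrow> 'k" where
  "augmentation u = linext (\<lambda>x (_::unit). 1) u ()"

lemma augmentation_eq_sum: "augmentation u = (\<Sum>x\<in>supp u. u x)" by (simp add: augmentation_def linext_def)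

lemma augmentation_linext: "u \<in> finsupp \<Longrightarrow> (\<And>x. \<phi> x \<in> finsupp) \<Longrightarrow> augmentation (linext \<phi> u) = (\<Sum>x\<in>supp u. u x * augmentation (\<phi> x))"
  unfolding augmentation_def by (subst linext_linext) (auto simp: linext_def)

lemma augmentation_delta[simp]: "augmentation (delta x) = 1" by (simp add: augmentation_def)

lemma augmentation_add: "u \<in> finsupp \<Longrightarrow> v \<in> finsupp \<Longrightarrow> augmentation (u + v) = augmentation u + augmentation v"
  unfolding augmentation_def by (simp add: linext_add plus_fun_apply)
lemma augmentation_fscale: "augmentation (fscale c u) = c * augmentation u"
  unfolding augmentation_def by (simp add: linext_fscale fscale_apply)

lemma augI_augmentation: "augI G = {u \<in> free (carrier G). augmentation u = 0}"
  by (simp add: augI_def augmentation_eq_sum)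

lemma augI_subspace: "fun_vs.subspace (augI G)"
proof -
  have z: "augmentation (0::'b \<Rightarrow> 'k::field) = 0" by (simp add: augmentation_eq_sum)
  have "fun_vs.subspace {u \<in> free (carrier G). augmentation u = (0::'k::field)}"
    unfolding fun_vs.subspace_def
  proof (intro conjI ballI allI)
    show "0 \<in> {u \<in> free (carrier G). augmentation u = (0::'k)}" using z fun_vs.subspace_0[OF free_subspace] by auto
  next
    fix x y assume xy: "x \<in> {u \<in> free (carrier G). augmentation u = (0::'k)}" "y \<in> {u \<in> free (carrier G). augmentation u = (0::'k)}"
    then have "x \<in> finsupp" "y \<in> finsupp" using free_finsupp by auto
    then show "x + y \<in> {u \<in> free (carrier G). augmentation u = (0::'k)}"
      using xy fun_vs.subspace_add[OF free_subspace] by (auto simp: augmentation_add)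
  next
    fix c x assume "x \<in> {u \<in> free (carrier G). augmentation u = (0::'k)}"
    then show "fscale c x \<in> {u \<in> free (carrier G). augmentation u = (0::'k)}"
      using fun_vs.subspace_scale[OF free_subspace] by (auto simp: augmentation_fscale)
  qed
  then show ?thesis by (simp add: augI_augmentation)
qed

lemma augI_free: "augI G \<subseteq> free (carrier G)" by (auto simp: augI_def)

section \<open>Contracting a tensor factor\<close>

lemma separating_functional:
  fixes B :: "('b \<Rightarrow> 'k::field) set"
  assumes B: "fun_vs.subspace B" and x0: "x0 \<notin> B"
  obtains f :: "('b \<Rightarrow> 'k) \<Rightarrow> 'k" where "Vector_Spaces.linear fscale (*) f" "\<And>u. u \<in> B \<Longrightarrow> f u = 0" "f x0 = 1"
proof -
  obtain B1 where B1: "B1 \<subseteq> B" "fun_vs.independent B1" "B \<subseteq> fun_vs.span B1"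
    by (rule fun_vs.maximal_independent_subset)
  have sB1: "fun_vs.span B1 = B" using B1 B fun_vs.span_minimal by blast
  have x0B1: "x0 \<notin> fun_vs.span B1" using x0 sB1 by simp
  have ind: "fun_vs.independent (insert x0 B1)" by (rule fun_vs.independent_insertI[OF x0B1 B1(2)])
  define f :: "('b \<Rightarrow> 'k) \<Rightarrow> 'k" where "f = fun_dual_pair.construct (insert x0 B1) (\<lambda>b. if b = x0 then 1 else 0)"
  have lin_f: "Vector_Spaces.linear fscale (*) f" unfolding f_def by (rule fun_dual_pair.linear_construct[OF ind])
  have fb: "f b = (if b = x0 then 1 else 0)" if "b \<in> insert x0 B1" for b
    unfolding f_def by (rule fun_dual_pair.construct_basis[OF ind that])
  have z: "f u = 0" if "u \<in> B" for u
  proof -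
    have "u \<in> fun_vs.span B1" using that sB1 by simp
    then show ?thesis
    proof (induction rule: fun_vs.span_induct_alt)
      case base then show ?case using lin_f unfolding linear_iff by (metis fun_vs.scale_zero_left mult_zero_left)
    next
      case (step c x y)
      have "x \<noteq> x0" using step x0B1 fun_vs.span_base by blast
      then have "f x = 0" using fb[of x] step by auto
      then show ?case using step lin_f unfolding linear_iff by simp
    qed
  qed
  have "f x0 = 1" using fb[of x0] by simp
  then show ?thesis using that lin_f z by blast
qed

definition contract_snd :: "(('c \<Rightarrow> 'k::field) \<Rightarrow> 'k) \<Rightarrow> ('b \<times> 'c \<Rightarrow> 'k) \<Rightarrow> 'b \<Rightarrow> 'k" where
  "contract_snd f w = (\<lambda>g. f (\<lambda>h. w (g, h)))"

lemma contract_snd_tens: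
  assumes f: "Vector_Spaces.linear fscale (*) f"
  shows "contract_snd f (tens u v) = fscale (f v) u"
proof
  fix g
  have "(\<lambda>h. tens u v (g, h)) = fscale (u g) v" by (simp add: fun_eq_iff tens_apply fscale_apply)
  then show "contract_snd f (tens u v) g = fscale (f v) u g"
    using f unfolding contract_snd_def linear_iff by (simp add: fscale_apply mult.commute)
qed

lemma fs_linear_contract_snd:
  fixes f :: "('c \<Rightarrow> 'k::field) \<Rightarrow> 'k"
  assumes f: "Vector_Spaces.linear fscale (*) f"
  shows "fs_linear (contract_snd f :: ('b \<times> 'c \<Rightarrow> 'k) \<Rightarrow> 'b \<Rightarrow> 'k)"
  unfolding fs_linear_def
proof (intro conjI ballI allI)
  fix u v :: "'b \<times> 'c \<Rightarrow> 'k" assume "u \<in> finsupp" "v \<in> finsupp"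
  show "contract_snd f (u + v) = contract_snd f u + contract_snd f v"
  proof
    fix g
    have a: "(\<lambda>h. (u + v) (g, h)) = (\<lambda>h. u (g, h)) + (\<lambda>h. v (g, h))"
      by (simp add: fun_eq_iff plus_fun_apply)
    have c: "f ((\<lambda>h. u (g, h)) + (\<lambda>h. v (g, h))) = f (\<lambda>h. u (g, h)) + f (\<lambda>h. v (g, h))"
      using f unfolding linear_iff by blast
    show "contract_snd f (u + v) g = (contract_snd f u + contract_snd f v) g"
      unfolding contract_snd_def a c by (simp only: plus_fun_apply)
  qed
next
  fix u :: "'b \<times> 'c \<Rightarrow> 'k" and c assume "u \<in> finsupp"
  show "contract_snd f (fscale c u) = fscale c (contract_snd f u)"
  proof
    fix g
    have b: "(\<lambda>h. fscale c u (g, h)) = fscale c (\<lambda>h. u (g, h))"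
      by (simp add: fun_eq_iff fscale_apply)
    have d: "f (fscale c (\<lambda>h. u (g, h))) = c * f (\<lambda>h. u (g, h))"
      using f unfolding linear_iff by blast
    show "contract_snd f (fscale c u) g = fscale c (contract_snd f u) g"
      unfolding contract_snd_def b d by (simp only: fscale_apply)
  qed
qed

lemma contract_snd_tZer_slice:
  assumes f: "Vector_Spaces.linear fscale (*) f" and F: "filtration F"
    and fz: "\<And>u. u \<in> F (Suc m) \<Longrightarrow> f u = 0"
    and w: "w \<in> fun_vs.span (tspace (F (Suc p)) (F m) \<union> tspace (F p) (F (Suc m)))"
  shows "contract_snd f w \<in> F (Suc p)"
proof (rule fs_linear_span[OF fs_linear_contract_snd[OF f] _ filtration_subspace[OF F] _ w])
  show "tspace (F (Suc p)) (F m) \<union> tspace (F p) (F (Suc m)) \<subseteq> finsupp"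
    using tspace_finsupp[OF filtration_finsupp[OF F] filtration_finsupp[OF F]] by blast
  fix x assume "x \<in> tspace (F (Suc p)) (F m) \<union> tspace (F p) (F (Suc m))"
  then show "contract_snd f x \<in> F (Suc p)"
  proof
    assume "x \<in> tspace (F (Suc p)) (F m)"
    then show ?thesis
      by (rule tspace_map[OF fs_linear_contract_snd[OF f] filtration_finsupp[OF F] filtration_finsupp[OF F] filtration_subspace[OF F], rotated])
         (simp add: contract_snd_tens[OF f] fun_vs.subspace_scale[OF filtration_subspace[OF F]])
  next
    assume "x \<in> tspace (F p) (F (Suc m))"
    then show ?thesis
      by (rule tspace_map[OF fs_linear_contract_snd[OF f] filtration_finsupp[OF F] filtration_finsupp[OF F] filtration_subspace[OF F], rotated])
         (simp add: contract_snd_tens[OF f] fz fun_vs.subspace_0[OF filtration_subspace[OF F]])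
  qed
qed

definition augmentation_fst :: "('b \<times> 'c \<Rightarrow> 'k::field) \<Rightarrow> 'c \<Rightarrow> 'k" where
  "augmentation_fst = linext (\<lambda>xy. delta (snd xy))"

lemma fs_linear_augmentation_fst: "fs_linear augmentation_fst" unfolding augmentation_fst_def by (rule fs_linear_linext)

lemma augmentation_fst_tens: "u \<in> finsupp \<Longrightarrow> v \<in> finsupp \<Longrightarrow> augmentation_fst (tens u v) = fscale (augmentation u) v"
proof -
  assume u: "u \<in> finsupp" and v: "v \<in> finsupp"
  have "augmentation_fst (tens u v) = linext (\<lambda>x. augmentation_fst (linext (\<lambda>y. delta (x, y)) v)) u"
    unfolding tens_as_linext[OF u v] augmentation_fst_def by (rule linext_linext[OF u]) (use v in \<open>auto intro!: linext_finsupp\<close>)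
  also have "\<dots> = linext (\<lambda>x. v) u"
    unfolding augmentation_fst_def by (intro linext_fun_cong, subst linext_linext[OF v]) (auto simp: linext_expand[OF v])
  also have "\<dots> = fscale (augmentation u) v"
    by (simp add: linext_def augmentation_eq_sum fun_eq_iff fscale_apply sum_distrib_right)
  finally show ?thesis .
qed

lemma comulG_as_linext: "u \<in> finsupp \<Longrightarrow> comulG u = linext (\<lambda>x. delta (x, x)) u"
proof (rule ext, clarify)
  fix a b assume u: "u \<in> finsupp"
  have "linext (\<lambda>x. delta (x, x)) u (a, b) = (\<Sum>x\<in>supp u. if x = a then (if a = b then u x else 0) else 0)"
    unfolding linext_def by (intro sum.cong refl) (auto simp: delta_def)
  also have "\<dots> = (if a \<in> supp u then (if a = b then u a else 0) else 0)"
    using u by (simp add: finsupp_iff sum.delta)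
  also have "\<dots> = comulG u (a, b)" by (auto simp: comulG_def)
  finally show "comulG u (a, b) = linext (\<lambda>x. delta (x, x)) u (a, b)" by simp
qed

lemma augmentation_fst_comulG: "u \<in> finsupp \<Longrightarrow> augmentation_fst (comulG u) = u"
  unfolding comulG_as_linext augmentation_fst_def by (subst linext_linext) (auto simp: linext_expand)

definition fix_snd_degree :: "'c \<Rightarrow> ('a \<times> ('c \<times> 'b) \<Rightarrow> 'k) \<Rightarrow> ('a \<times> 'b \<Rightarrow> 'k)" where
  "fix_snd_degree m Y = (\<lambda>(a, h). Y (a, (m, h)))"

lemma fix_snd_degree_tens: "fix_snd_degree m (tens u v) = tens u (\<lambda>h. v (m, h))"
  by (rule ext, clarify) (simp add: fix_snd_degree_def tens_apply)

lemma supp_fix_snd_degree: "supp (fix_snd_degree m Y) \<subseteq> (\<lambda>(a, b). (a, snd b)) ` supp Y"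
  by (auto simp: fix_snd_degree_def supp_def image_iff split: prod.splits)

lemma finsupp_fix_snd_degree: "Y \<in> finsupp \<Longrightarrow> fix_snd_degree m Y \<in> finsupp"
  unfolding finsupp_iff by (rule finite_subset[OF supp_fix_snd_degree]) simp

lemma fs_linear_fix_snd_degree: "fs_linear (fix_snd_degree m :: ('a \<times> ('c \<times> 'b) \<Rightarrow> 'k::field) \<Rightarrow> _)"
  unfolding fs_linear_def by (auto simp: fix_snd_degree_def fun_eq_iff plus_fun_apply fscale_apply)

lemma fs_linear_comp: "fs_linear L1 \<Longrightarrow> fs_linear L2 \<Longrightarrow> (\<And>u. u \<in> finsupp \<Longrightarrow> L2 u \<in> finsupp) \<Longrightarrow> fs_linear (\<lambda>u. L1 (L2 u))"
  unfolding fs_linear_def by auto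

lemma supp_contract_snd:
  assumes f: "Vector_Spaces.linear fscale (*) f"
  shows "supp (contract_snd f w) \<subseteq> fst ` supp w"
proof
  fix g assume g: "g \<in> supp (contract_snd f w)"
  show "g \<in> fst ` supp w"
  proof (rule ccontr)
    assume "g \<notin> fst ` supp w"
    then have "(\<lambda>h. w (g, h)) = 0" by (force simp: fun_eq_iff zero_fun_def image_iff)
    then have "contract_snd f w g = 0" using f unfolding contract_snd_def linear_iff by (metis fun_vs.scale_zero_left mult_zero_left)
    then show False using g by simp
  qed
qed

lemma finsupp_contract_snd: "Vector_Spaces.linear fscale (*) f \<Longrightarrow> w \<in> finsupp \<Longrightarrow> contract_snd f w \<in> finsupp"
  unfolding finsupp_iff by (rule finite_subset[OF supp_contract_snd]) auto

lemma slice_diff: "slice (x - y) n = slice x n - slice y n"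
  by (simp add: slice_def fun_eq_iff minus_apply)


lemma slice2_finsupp: "y \<in> finsupp \<Longrightarrow> slice2 y p q \<in> finsupp"
proof -
  assume y: "y \<in> finsupp"
  have "supp (slice2 y p q) \<subseteq> (\<lambda>((a, b), (c, d)). (b, d)) ` supp y"
    by (auto simp: slice2_def supp_def image_iff split: prod.splits) force
  then show ?thesis using y unfolding finsupp_iff by (meson finite_imageI finite_subset)
qed

lemma comulG_zero[simp]: "comulG 0 = 0"
  by (simp add: comulG_def fun_eq_iff zero_fun_def)

lemma augmentation_diff: "u \<in> finsupp \<Longrightarrow> v \<in> finsupp \<Longrightarrow> augmentation (u - v) = augmentation u - augmentation v"
proof -
  assume u: "u \<in> finsupp" and v: "v \<in> finsupp"
  have "augmentation u = augmentation ((u - v) + v)" by simp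
  also have "\<dots> = augmentation (u - v) + augmentation v" using u v by (intro augmentation_add) auto
  finally show ?thesis by simp
qed

lemma grRep_finsupp: "x \<in> grRep F \<Longrightarrow> x \<in> finsupp" by (simp add: grRep_def finsupp_iff)

lemma grRep_truncate_top_degree:
  assumes F: "filtration F" and xR: "x \<in> grRep F" and xZ: "x \<notin> grZer F"
  obtains x' m where "x - x' \<in> grZer F" "slice x' m = slice x m" "slice x m \<notin> F (Suc m)"
    "\<And>n. m < n \<Longrightarrow> slice x' n = 0"
proof -
  have xf: "finite (supp x)" using xR by (simp add: grRep_def)
  define N where "N = {n. slice x n \<notin> F (Suc n)}"
  have "N \<subseteq> fst ` supp x"
  proof
    fix n assume n: "n \<in> N"
    show "n \<in> fst ` supp x"
    proof (rule ccontr)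
      assume "n \<notin> fst ` supp x"
      then have "slice x n = 0" by (force simp: slice_def fun_eq_iff zero_fun_def image_iff)
      then show False using n fun_vs.subspace_0[OF filtration_subspace[OF F]] by (simp add: N_def)
    qed
  qed
  then have Nfin: "finite N" using xf by (meson finite_imageI finite_subset)
  have "N \<noteq> {}"
  proof
    assume "N = {}"
    then have "\<forall>n. slice x n \<in> F (Suc n)" by (auto simp: N_def)
    then show False using xZ xf by (simp add: grZer_def)
  qed
  define m where "m = Max N"
  have mN: "m \<in> N" and mmax: "\<And>n. n \<in> N \<Longrightarrow> n \<le> m"
    using Nfin \<open>N \<noteq> {}\<close> by (simp_all add: m_def)
  define x' where "x' = (\<lambda>(n, g). if n \<le> m then x (n, g) else 0)"
  have sx': "slice x' n = (if n \<le> m then slice x n else 0)" for n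
    by (auto simp: slice_def x'_def fun_eq_iff zero_fun_def)
  have "finite (supp x')"
    using xf by (rule finite_subset[rotated]) (auto simp: supp_def x'_def split: if_splits)
  then have "finite (supp (x - x'))"
    using xf supp_diff[of x x'] by (meson finite_Un finite_subset)
  moreover have "slice (x - x') n \<in> F (Suc n)" for n
  proof (cases "n \<le> m")
    case True then show ?thesis
      by (simp add: slice_diff sx' fun_vs.subspace_0[OF filtration_subspace[OF F]])
  next
    case False
    then have "n \<notin> N" using mmax by force
    then show ?thesis using False by (simp add: slice_diff sx' N_def)
  qed
  ultimately have "x - x' \<in> grZer F" by (simp add: grZer_def)
  moreover have "slice x m \<notin> F (Suc m)" using mN by (simp add: N_def)
  ultimately show ?thesis using sx' by (intro that[of x' m]) simp_all
qed

definition contract_degree :: "(('b \<Rightarrow> 'k::field) \<Rightarrow> 'k) \<Rightarrow> nat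
    \<Rightarrow> ((nat \<times> 'c) \<times> (nat \<times> 'b) \<Rightarrow> 'k) \<Rightarrow> nat \<times> 'c \<Rightarrow> 'k" where
  "contract_degree f m Y = contract_snd f (fix_snd_degree m Y)"

lemma slice_contract_degree: "slice (contract_degree f m Y) j = contract_snd f (slice2 Y j m)"
  by (simp add: contract_degree_def slice_def contract_snd_def fix_snd_degree_def slice2_def fun_eq_iff)

lemma fs_linear_contract_degree:
  "Vector_Spaces.linear fscale (*) f \<Longrightarrow> fs_linear (contract_degree f m)"
  unfolding contract_degree_def[abs_def]
  by (rule fs_linear_comp[OF fs_linear_contract_snd fs_linear_fix_snd_degree finsupp_fix_snd_degree])

lemma finsupp_contract_degree:
  "Vector_Spaces.linear fscale (*) f \<Longrightarrow> Y \<in> finsupp \<Longrightarrow> contract_degree f m Y \<in> finsupp"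
  unfolding contract_degree_def by (rule finsupp_contract_snd[OF _ finsupp_fix_snd_degree])

lemma contract_degree_tens:
  "Vector_Spaces.linear fscale (*) f \<Longrightarrow> contract_degree f m (tens u v) = fscale (f (slice v m)) u"
  unfolding contract_degree_def fix_snd_degree_tens by (simp add: contract_snd_tens slice_def)

lemma contract_degree_tZer:
  assumes f: "Vector_Spaces.linear fscale (*) f" and F: "filtration F"
    and fz: "\<And>u. u \<in> F (Suc m) \<Longrightarrow> f u = 0" and Y: "Y \<in> tZer F F"
  shows "contract_degree f m Y \<in> grZer F"
proof -
  have "Y \<in> finsupp" using Y by (simp add: tZer_def finsupp_iff)
  then have "finite (supp (contract_degree f m Y))"
    using finsupp_contract_degree[OF f] by (simp add: finsupp_iff)
  moreover have "slice (contract_degree f m Y) p \<in> F (Suc p)" for p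
  proof -
    have "slice2 Y p m \<in> lspan (tspace (F (Suc p)) (F m) \<union> tspace (F p) (F (Suc m)))"
      using Y unfolding tZer_def by blast
    then show ?thesis
      unfolding slice_contract_degree lspan_eq using contract_snd_tZer_slice[OF f F fz] by blast
  qed
  ultimately show ?thesis by (simp add: grZer_def)
qed

lemma contract_degree_in_subcoalgebra:
  assumes f: "Vector_Spaces.linear fscale (*) f" and F: "filtration F"
    and fz: "\<And>u. u \<in> F (Suc m) \<Longrightarrow> f u = 0"
    and W: "fun_vs.subspace W" "grZer F \<subseteq> W" "W \<subseteq> finsupp"
    and y: "y \<in> fun_vs.span ({tens u v | u v. u \<in> W \<and> v \<in> W} \<union> tZer F F)"
  shows "contract_degree f m y \<in> W"
proof (rule fs_linear_span[OF fs_linear_contract_degree[OF f] _ W(1) _ y])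
  show "{tens u v |u v. u \<in> W \<and> v \<in> W} \<union> tZer F F \<subseteq> finsupp"
    using W(3) by (auto simp: tZer_def finsupp_iff intro!: finsupp_tens)
  fix Y assume "Y \<in> {tens u v |u v. u \<in> W \<and> v \<in> W} \<union> tZer F F"
  then show "contract_degree f m Y \<in> W"
  proof
    assume "Y \<in> {tens u v |u v. u \<in> W \<and> v \<in> W}"
    then obtain u v where "Y = tens u v" "u \<in> W" by blast
    then show ?thesis by (simp add: contract_degree_tens[OF f] fun_vs.subspace_scale[OF W(1)])
  qed (use contract_degree_tZer[OF f F fz] W(2) in blast)
qed

lemma contract_snd_induced_above_top:
  assumes f: "Vector_Spaces.linear fscale (*) f" and F: "filtration F"
    and fz: "\<And>u. u \<in> F (Suc m) \<Longrightarrow> f u = 0"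
    and r: "induced_rel F F F D x y" and D0: "D 0 = 0" and top: "\<And>n. m < n \<Longrightarrow> slice x n = 0"
  shows "contract_snd f (slice2 y (Suc p) m) \<in> F (Suc (Suc p))"
proof -
  define n where "n = Suc p + m"
  have "(\<Sum>p'\<in>{0..n}. slice2 y p' (n - p')) - D (slice x n) \<in> tFil F F (Suc n)"
    by (rule induced_rel_sum[OF r])
  then have S: "(\<Sum>p'\<in>{0..n}. slice2 y p' (n - p')) \<in> tFil F F (Suc n)"
    using top[of n] D0 by (simp add: n_def)
  have yR: "y \<in> tRep F F" using r by (simp add: induced_rel_def)
  have "slice2 y (Suc p) (n - Suc p)
      \<in> lspan (tspace (F (Suc (Suc p))) (F (n - Suc p)) \<union> tspace (F (Suc p)) (F (Suc (n - Suc p))))"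
    by (rule component_of_tFil_sum[OF F F _ S]) (auto simp: n_def tRep_slice[OF yR])
  moreover have "n - Suc p = m" by (simp add: n_def)
  ultimately show ?thesis using contract_snd_tZer_slice[OF f F fz] unfolding lspan_eq by simp
qed

section \<open>The augmentation filtration\<close>

context group
begin

lemma free_supp: "u \<in> free (carrier G) \<Longrightarrow> x \<in> supp u \<Longrightarrow> x \<in> carrier G"
  by (auto simp: free_def)

lemma free_finsupp': "u \<in> free X \<Longrightarrow> u \<in> finsupp" using free_finsupp by auto

lemma free_supp': "u \<in> free (carrier G) \<Longrightarrow> u x \<noteq> 0 \<Longrightarrow> x \<in> carrier G"
  by (auto simp: free_def)

lemma gmul_free:
  assumes u: "u \<in> free (carrier G)" and v: "v \<in> free (carrier G)"
  shows "gmul G u v \<in> free (carrier G)"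
  unfolding gmul_as_linext
  by (intro linext_free free_finsupp'[OF u] free_finsupp'[OF v] delta_free m_closed)
     (auto dest: free_supp'[OF u] free_supp'[OF v])

lemma gmul_assoc:
  fixes u v w :: "'a \<Rightarrow> 'k::field"
  assumes u: "u \<in> free (carrier G)" and v: "v \<in> free (carrier G)" and w: "w \<in> free (carrier G)"
  shows "gmul G (gmul G u v) w = gmul G u (gmul G v w)"
proof -
  have uf: "u \<in> finsupp" and vf: "v \<in> finsupp" and wf: "w \<in> finsupp" using u v w by (auto intro: free_finsupp')
  have fin1: "\<And>x. linext (\<lambda>y. delta (x \<otimes> y)) v \<in> finsupp" using vf by (intro linext_finsupp) auto
  have fin2: "\<And>y. linext (\<lambda>t. delta (y \<otimes> t)) w \<in> finsupp" using wf by (intro linext_finsupp) auto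
  have "gmul G (gmul G u v) w = linext (\<lambda>z. linext (\<lambda>t. delta (z \<otimes> t)) w) (linext (\<lambda>x. linext (\<lambda>y. delta (x \<otimes> y)) v) u)"
    unfolding gmul_as_linext ..
  also have "\<dots> = linext (\<lambda>x. linext (\<lambda>z. linext (\<lambda>t. delta (z \<otimes> t)) w) (linext (\<lambda>y. delta (x \<otimes> y)) v)) u"
    by (rule linext_linext[OF uf fin1])
  also have "\<dots> = linext (\<lambda>x. linext (\<lambda>y. linext (\<lambda>t. delta ((x \<otimes> y) \<otimes> t)) w) v) u"
    by (rule linext_fun_cong, subst linext_linext[OF vf]) simp_all
  also have "\<dots> = linext (\<lambda>x. linext (\<lambda>y. linext (\<lambda>t. delta (x \<otimes> (y \<otimes> t))) w) v) u"
    by (intro linext_fun_cong) (simp add: m_assoc free_supp'[OF u] free_supp'[OF v] free_supp'[OF w])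
  also have "\<dots> = linext (\<lambda>x. linext (\<lambda>s. delta (x \<otimes> s)) (linext (\<lambda>y. linext (\<lambda>t. delta (y \<otimes> t)) w) v)) u"
    by (rule linext_fun_cong, subst linext_linext[OF vf fin2], rule linext_fun_cong, subst linext_linext[OF wf]) simp_all
  also have "\<dots> = gmul G u (gmul G v w)"
    unfolding gmul_as_linext ..
  finally show ?thesis .
qed

lemma augmentation_gmul:
  assumes u: "u \<in> finsupp" and v: "v \<in> finsupp"
  shows "augmentation (gmul G u v) = augmentation u * (augmentation v :: 'k::field)"
proof -
  have "augmentation (gmul G u v) = (\<Sum>x\<in>supp u. u x * augmentation (linext (\<lambda>y. delta (x \<otimes> y)) v))"
    unfolding gmul_as_linext by (rule augmentation_linext[OF u]) (use v in \<open>auto intro: linext_finsupp\<close>)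
  also have "\<dots> = (\<Sum>x\<in>supp u. u x * augmentation v)"
  proof (intro sum.cong refl)
    fix x show "u x * augmentation (linext (\<lambda>y. delta (x \<otimes> y)) v) = u x * augmentation v"
    proof -
      have "augmentation (linext (\<lambda>y. delta (x \<otimes> y)) v) = (\<Sum>y\<in>supp v. v y * augmentation (delta (x \<otimes> y) :: 'a \<Rightarrow> 'k))"
        by (rule augmentation_linext[OF v]) simp
      also have "\<dots> = augmentation v" by (simp only: augmentation_delta mult_1_right) (simp only: augmentation_eq_sum)
      finally show ?thesis by simp
    qed
  qed
  also have "\<dots> = augmentation u * augmentation v" by (simp add: augmentation_eq_sum sum_distrib_right)
  finally show ?thesis .
qed

lemma augI_mult: "u \<in> augI G \<Longrightarrow> v \<in> free (carrier G) \<Longrightarrow> gmul G u v \<in> augI G"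
  by (auto simp: augI_augmentation gmul_free augmentation_gmul free_finsupp')

lemma IGpow_free: "IGpow G n \<subseteq> free (carrier G)"
proof (induction n)
  case (Suc n)
  show ?case unfolding IGpow.simps lspan_eq
    by (rule fun_vs.span_minimal[OF _ free_subspace]) (use Suc augI_free in \<open>auto intro!: gmul_free\<close>)
qed simp

lemma IGpow_free': "u \<in> IGpow G n \<Longrightarrow> u \<in> free (carrier G)" using IGpow_free by blast

lemma augI_free': "v \<in> augI G \<Longrightarrow> v \<in> free (carrier G)" using augI_free by blast

lemma IGpow_gen_finsupp: "u \<in> IGpow G a \<Longrightarrow> v \<in> augI G \<Longrightarrow> gmul G u v \<in> finsupp"
  by (rule free_finsupp'[OF gmul_free[OF IGpow_free' augI_free']])

lemma IGpow_subspace: "fun_vs.subspace (IGpow G n)"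
  by (cases n) (auto simp: lspan_eq free_subspace)

lemma IGpow_finsupp: "IGpow G n \<subseteq> finsupp" using IGpow_free free_finsupp by blast

lemma IGpow_gmul_right:
  fixes u f :: "'a \<Rightarrow> 'k::field"
  shows "u \<in> IGpow G a \<Longrightarrow> f \<in> free (carrier G) \<Longrightarrow> gmul G u f \<in> IGpow G a"
proof (induction a arbitrary: u)
  case 0 then show ?case by (simp add: gmul_free)
next
  case (Suc a)
  let ?S = "{gmul G u v |u v. u \<in> IGpow G a \<and> v \<in> augI G} :: ('a \<Rightarrow> 'k) set"
  have "?S \<subseteq> finsupp" using IGpow_gen_finsupp by blast
  show ?case
  proof (rule fs_linear_span[OF fs_linear_gmul1 \<open>?S \<subseteq> finsupp\<close> IGpow_subspace])
    show "u \<in> fun_vs.span ?S" using Suc.prems(1) unfolding IGpow.simps lspan_eq .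
    fix x assume "x \<in> ?S"
    then obtain u' v' where x: "x = gmul G u' v'" "u' \<in> IGpow G a" "v' \<in> augI G" by auto
    have "gmul G x f = gmul G u' (gmul G v' f)"
      unfolding x(1) by (rule gmul_assoc) (use x IGpow_free augI_free Suc.prems(2) in auto)
    moreover have "gmul G v' f \<in> augI G" using augI_mult x(3) Suc.prems(2) by auto
    ultimately show "gmul G x f \<in> IGpow G (Suc a)"
      unfolding IGpow.simps lspan_eq using x(2) by (intro fun_vs.span_base) auto
  qed
qed

lemma IGpow_Suc_subset: "IGpow G (Suc a) \<subseteq> IGpow G a"
  unfolding IGpow.simps lspan_eq
  by (rule fun_vs.span_minimal[OF _ IGpow_subspace]) (use augI_free in \<open>auto intro!: IGpow_gmul_right\<close>)

lemma IGpow_filtration: "filtration (IGpow G)"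
  unfolding filtration_def using IGpow_subspace IGpow_Suc_subset IGpow_finsupp by blast

lemma IGpow_antimono: "a \<le> b \<Longrightarrow> IGpow G b \<subseteq> IGpow G a"
  by (rule filtration_antimono[OF IGpow_filtration])

lemma IGpow_gmul:
  fixes u w :: "'a \<Rightarrow> 'k::field"
  shows "u \<in> IGpow G a \<Longrightarrow> w \<in> IGpow G b \<Longrightarrow> gmul G u w \<in> IGpow G (a + b)"
proof (induction b arbitrary: w)
  case 0 then show ?case using IGpow_gmul_right by simp
next
  case (Suc b)
  let ?S = "{gmul G u v |u v. u \<in> IGpow G b \<and> v \<in> augI G} :: ('a \<Rightarrow> 'k) set"
  have "?S \<subseteq> finsupp" using IGpow_gen_finsupp by blast
  show ?case
  proof (rule fs_linear_span[OF fs_linear_gmul2 \<open>?S \<subseteq> finsupp\<close> IGpow_subspace])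
    show "w \<in> fun_vs.span ?S" using Suc.prems(2) unfolding IGpow.simps lspan_eq .
    fix x assume "x \<in> ?S"
    then obtain u' v' where x: "x = gmul G u' v'" "u' \<in> IGpow G b" "v' \<in> augI G" by auto
    have "gmul G u x = gmul G (gmul G u u') v'"
      unfolding x(1) by (rule gmul_assoc[symmetric]) (use x IGpow_free augI_free Suc.prems(1) in auto)
    moreover have "gmul G u u' \<in> IGpow G (a + b)" using Suc.IH[OF Suc.prems(1) x(2)] .
    ultimately show "gmul G u x \<in> IGpow G (a + Suc b)"
      unfolding add_Suc_right IGpow.simps lspan_eq using x(3) by (intro fun_vs.span_base) auto
  qed
qed

lemma IGpow_1_eq_augI: "IGpow G (Suc 0) = augI G"
proof
  show "IGpow G (Suc 0) \<subseteq> augI G"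
    unfolding IGpow.simps lspan_eq
    by (rule fun_vs.span_minimal[OF _ augI_subspace]) (auto simp: augI_augmentation gmul_free augmentation_gmul free_finsupp')
  show "augI G \<subseteq> IGpow G (Suc 0)"
  proof
    fix v :: "'a \<Rightarrow> 'k::field" assume v: "v \<in> augI G"
    have "gmul G (delta \<one>) v = v"
    proof -
      have vf: "v \<in> finsupp" using v augI_free free_finsupp' by blast
      have "gmul G (delta \<one>) v = linext (\<lambda>y. delta (\<one> \<otimes> y)) v" unfolding gmul_as_linext by simp
      also have "\<dots> = linext delta v"
      proof (rule linext_fun_cong)
        fix x assume "x \<in> supp v"
        then have "x \<in> carrier G" using free_supp[OF augI_free'[OF v]] by blast
        then show "delta (\<one> \<otimes> x) = delta x" by simp
      qed
      finally show ?thesis using linext_expand[OF vf] by simp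
    qed
    then have e: "v = gmul G (delta \<one>) v" by simp
    show "v \<in> IGpow G (Suc 0)"
      unfolding IGpow.simps lspan_eq
    proof (intro fun_vs.span_base CollectI exI conjI)
      show "v = gmul G (delta \<one>) v" by (rule e)
      show "(delta \<one> :: 'a \<Rightarrow> 'k) \<in> free (carrier G)" by (rule delta_free[OF one_closed])
      show "v \<in> augI G" by (rule v)
    qed
  qed
qed

lemma tswap_comulG: "tswap (comulG u) = comulG u"
  by (rule ext, clarify) (simp add: tswap_def comulG_def)

lemma DG_is_cocommutative: "DG_cocommutative TYPE('k::field) G"
  unfolding DG_cocommutative_def
proof (intro ballI allI impI)
  fix x :: "nat \<times> 'a \<Rightarrow> 'k" and y
  assume r: "induced_rel (IGpow G) (IGpow G) (IGpow G) comulG x y"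
  have "tswap y - y \<in> tZer (IGpow G) (IGpow G)"
  proof (rule tswap_induced_diff_tZer[OF IGpow_filtration IGpow_filtration r r])
    fix n show "tswap (comulG (slice x n)) - comulG (slice x n) \<in> tFil (IGpow G) (IGpow G) (Suc n)"
      by (simp add: tswap_comulG fun_vs.subspace_0[OF tFil_subspace])
  qed
  then show "(\<lambda>z. y (prod.swap z)) - y \<in> tZer (IGpow G) (IGpow G)" by (simp add: tswap_def)
qed

declare IGpow.simps(2)[simp del]

subsection \<open>Irreducibility of \<open>\<D>(G)\<close>\<close>

definition unit_rep :: "nat \<times> 'a \<Rightarrow> 'k::field" where
  "unit_rep = (\<lambda>(n, g). if n = 0 \<and> g = \<one> then 1 else 0)"

lemma slice_unit_rep: "slice unit_rep n = (if n = 0 then delta \<one> else 0)"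
  by (auto simp: slice_def unit_rep_def delta_def fun_eq_iff zero_fun_def)

lemma unit_rep_finsupp: "unit_rep \<in> finsupp"
proof -
  have "supp unit_rep \<subseteq> {(0, \<one>)}" by (auto simp: supp_def unit_rep_def split: if_splits)
  then show ?thesis unfolding finsupp_iff by (rule finite_subset) simp
qed

lemma unit_rep_notin_grZer: "(unit_rep :: nat \<times> 'a \<Rightarrow> 'k::field) \<notin> grZer (IGpow G)"
proof
  assume "(unit_rep :: nat \<times> 'a \<Rightarrow> 'k) \<in> grZer (IGpow G)"
  then have "slice (unit_rep :: nat \<times> 'a \<Rightarrow> 'k) 0 \<in> IGpow G (Suc 0)" by (simp add: grZer_def)
  then have "(delta \<one> :: 'a \<Rightarrow> 'k) \<in> augI G" by (simp add: slice_unit_rep IGpow_1_eq_augI)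
  then show False by (simp add: augI_augmentation)
qed


lemma augmentation_fst_tspace_IGpow_Suc:
  fixes w :: "'a \<times> 'a \<Rightarrow> 'k::field"
  assumes "w \<in> tspace (IGpow G (Suc p)) (IGpow G q)"
  shows "augmentation_fst w = 0"
proof -
  have "augmentation_fst w \<in> {0}"
  proof (rule tspace_map[OF fs_linear_augmentation_fst IGpow_finsupp IGpow_finsupp fun_vs.subspace_single_0 _ assms])
    fix u v :: "'a \<Rightarrow> 'k" assume u: "u \<in> IGpow G (Suc p)" and v: "v \<in> IGpow G q"
    have "u \<in> IGpow G (Suc 0)" using u IGpow_antimono[of "Suc 0" "Suc p"] by auto
    then have "augmentation u = 0" by (simp add: IGpow_1_eq_augI augI_augmentation)
    moreover have "u \<in> finsupp" "v \<in> finsupp" using u v IGpow_finsupp by auto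
    ultimately show "augmentation_fst (tens u v) \<in> {0}" by (simp add: augmentation_fst_tens)
  qed
  then show ?thesis by simp
qed

lemma fs_linear_unit_tens_augmentation_fst:
  "fs_linear (\<lambda>w. tens (delta \<one>) (augmentation_fst w) :: 'a \<times> 'c \<Rightarrow> 'k::field)"
  unfolding fs_linear_def
  by (simp add: fs_linear_add[OF fs_linear_augmentation_fst] fs_linear_fscale[OF fs_linear_augmentation_fst]
      tens_add2 tens_sc2)

lemma tspace_IGpow_0_diff_unit:
  fixes V :: "('c \<Rightarrow> 'k::field) set"
  assumes V: "V \<subseteq> finsupp" and w: "w \<in> tspace (IGpow G 0) V"
  shows "w - tens (delta \<one>) (augmentation_fst w) \<in> tspace (IGpow G (Suc 0)) V"
proof (rule tspace_map[OF fs_linear_minus[OF fs_linear_id fs_linear_unit_tens_augmentation_fst]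
      IGpow_finsupp V tspace_subspace _ w])
  fix u :: "'a \<Rightarrow> 'k" and v assume u: "u \<in> IGpow G 0" and v: "v \<in> V"
  have uf: "u \<in> finsupp" using u IGpow_finsupp[of 0] by blast
  have vf: "v \<in> finsupp" using v V by blast
  have e: "tens u v - tens (delta \<one>) (augmentation_fst (tens u v))
      = tens (u - fscale (augmentation u) (delta \<one>)) v"
    unfolding augmentation_fst_tens[OF uf vf] tens_sc2 tens_diff1 tens_sc1 ..
  have "u - fscale (augmentation u) (delta \<one>) \<in> free (carrier G)"
    using u by (intro fun_vs.subspace_diff[OF free_subspace] fun_vs.subspace_scale[OF free_subspace] delta_free) auto
  moreover have "augmentation (u - fscale (augmentation u) (delta \<one>)) = 0"
    by (simp add: augmentation_diff[OF uf finsupp_fscale[OF finsupp_delta]] augmentation_fscale)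
  ultimately have "u - fscale (augmentation u) (delta \<one>) \<in> IGpow G (Suc 0)"
    by (simp add: IGpow_1_eq_augI augI_augmentation)
  then show "tens u v - tens (delta \<one>) (augmentation_fst (tens u v)) \<in> tspace (IGpow G (Suc 0)) V"
    unfolding e by (intro tens_in_tspace v)
qed

lemma augmentation_fst_tFil_IGpow:
  assumes "w \<in> tFil (IGpow G) (IGpow G) n"
  shows "augmentation_fst w \<in> IGpow G n"
proof (rule tFil_map[OF IGpow_filtration IGpow_filtration fs_linear_augmentation_fst IGpow_subspace assms])
  fix p and u v :: "'a \<Rightarrow> 'k::field"
  assume p: "p \<le> n" and u: "u \<in> IGpow G p" and v: "v \<in> IGpow G (n - p)"
  show "augmentation_fst (tens u v) \<in> IGpow G n"
  proof (cases p)
    case 0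
    have "u \<in> finsupp" "v \<in> finsupp" using u v IGpow_finsupp by blast+
    then show ?thesis using v 0 by (simp add: augmentation_fst_tens fun_vs.subspace_scale[OF IGpow_subspace])
  next
    case (Suc p')
    then have "augmentation_fst (tens u v) = 0"
      using augmentation_fst_tspace_IGpow_Suc tens_in_tspace[OF u v] by blast
    then show ?thesis by (simp add: fun_vs.subspace_0[OF IGpow_subspace])
  qed
qed

text \<open>The counit identity: (\<open>\<epsilon>\<close> \<open>\<otimes>\<close> id) \<open>\<Delta>\<close> = id on the associated graded.\<close>

lemma augmentation_fst_induced_comulG:
  assumes r: "induced_rel (IGpow G) (IGpow G) (IGpow G) comulG x y" and xR: "x \<in> grRep (IGpow G)"
  shows "augmentation_fst (slice2 y 0 m) - slice x m \<in> IGpow G (Suc m)"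
proof -
  let ?S = "\<Sum>p\<in>{0..m}. slice2 y p (m - p)"
  have yR: "y \<in> tRep (IGpow G) (IGpow G)" using r by (simp add: induced_rel_def)
  have sf: "\<And>p. slice2 y p (m - p) \<in> finsupp" using slice2_finsupp[OF tRep_finsupp[OF yR]] by blast
  have x0f: "slice x m \<in> finsupp" using xR IGpow_finsupp by (auto simp: grRep_def)
  have "augmentation_fst (?S - comulG (slice x m)) \<in> IGpow G (Suc m)"
    by (rule augmentation_fst_tFil_IGpow[OF induced_rel_sum[OF r]])
  moreover have "augmentation_fst (?S - comulG (slice x m)) = augmentation_fst (slice2 y 0 m) - slice x m"
  proof -
    have "augmentation_fst (?S - comulG (slice x m)) = augmentation_fst ?S - augmentation_fst (comulG (slice x m))"
      by (rule fs_linear_diff[OF fs_linear_augmentation_fst])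
        (use sf x0f in \<open>auto simp: comulG_as_linext intro!: linext_finsupp finsupp_sum\<close>)
    also have "augmentation_fst (comulG (slice x m)) = slice x m" by (rule augmentation_fst_comulG[OF x0f])
    also have "augmentation_fst ?S = (\<Sum>p\<in>{0..m}. augmentation_fst (slice2 y p (m - p)))"
      by (rule fs_linear_sum[OF fs_linear_augmentation_fst]) (use sf in auto)
    also have "\<dots> = augmentation_fst (slice2 y 0 (m - 0))
        + (\<Sum>p\<in>{0..m} - {0}. augmentation_fst (slice2 y p (m - p)))"
      by (subst sum.remove[of _ 0]) auto
    also have "(\<Sum>p\<in>{0..m} - {0}. augmentation_fst (slice2 y p (m - p))) = 0"
    proof (rule sum.neutral, rule ballI)
      fix p assume "p \<in> {0..m} - {0}"
      then obtain p' where "p = Suc p'" by (cases p) auto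
      then show "augmentation_fst (slice2 y p (m - p)) = 0"
        using augmentation_fst_tspace_IGpow_Suc tRep_slice[OF yR] by blast
    qed
    finally show ?thesis by simp
  qed
  ultimately show ?thesis by simp
qed

lemma contract_snd_induced_degree_0:
  assumes f: "Vector_Spaces.linear fscale (*) f" and fz: "\<And>u. u \<in> IGpow G (Suc m) \<Longrightarrow> f u = 0"
    and f1: "f (slice x m) = 1"
    and r: "induced_rel (IGpow G) (IGpow G) (IGpow G) comulG x y" and xR: "x \<in> grRep (IGpow G)"
  shows "contract_snd f (slice2 y 0 m) - delta \<one> \<in> IGpow G (Suc 0)"
proof -
  define w0 where "w0 = slice2 y 0 m"
  have yR: "y \<in> tRep (IGpow G) (IGpow G)" using r by (simp add: induced_rel_def)
  have w0f: "w0 \<in> finsupp" unfolding w0_def by (rule slice2_finsupp[OF tRep_finsupp[OF yR]])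
  have Lf: "augmentation_fst w0 \<in> finsupp"
    using w0f unfolding augmentation_fst_def by (auto intro!: linext_finsupp)
  have "contract_snd f (w0 - tens (delta \<one>) (augmentation_fst w0)) \<in> IGpow G (Suc 0)"
  proof (rule tspace_map[OF fs_linear_contract_snd[OF f] IGpow_finsupp IGpow_finsupp IGpow_subspace])
    show "w0 - tens (delta \<one>) (augmentation_fst w0) \<in> tspace (IGpow G (Suc 0)) (IGpow G m)"
      unfolding w0_def by (intro tspace_IGpow_0_diff_unit IGpow_finsupp tRep_slice[OF yR])
  qed (simp add: contract_snd_tens[OF f] fun_vs.subspace_scale[OF IGpow_subspace])
  moreover have "contract_snd f (tens (delta \<one>) (augmentation_fst w0)) = delta \<one>"
  proof -
    have "f (augmentation_fst w0) = f (slice x m) + f (augmentation_fst w0 - slice x m)"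
      using f unfolding linear_iff by (metis add_diff_cancel_left' diff_add_cancel)
    then have "f (augmentation_fst w0) = 1"
      using fz[OF augmentation_fst_induced_comulG[OF r xR]] f1 by (simp add: w0_def)
    then show ?thesis by (simp add: contract_snd_tens[OF f] fscale_def)
  qed
  moreover have "contract_snd f w0 = contract_snd f (w0 - tens (delta \<one>) (augmentation_fst w0))
      + contract_snd f (tens (delta \<one>) (augmentation_fst w0))"
    using fs_linear_contract_snd[OF f] w0f Lf unfolding fs_linear_def
    by (metis diff_add_cancel finsupp_diff finsupp_tens finsupp_delta)
  ultimately show ?thesis by (simp add: w0_def)
qed

lemma DG_subcoalgebra_contains_unit_rep:
  fixes W :: "(nat \<times> 'a \<Rightarrow> 'k::field) set"
  assumes W: "DG_subcoalgebra G W" and W0: "W \<noteq> grZer (IGpow G)"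
  shows "unit_rep \<in> W"
proof -
  let ?F = "IGpow G :: nat \<Rightarrow> ('a \<Rightarrow> 'k) set"
  have ZW: "grZer ?F \<subseteq> W" and WR: "W \<subseteq> grRep ?F" and Wsp: "lspan W = W"
    and co: "\<And>x. x \<in> W \<Longrightarrow> \<exists>y. induced_rel ?F ?F ?F comulG x y \<and>
        y \<in> lspan ({tens u v | u v. u \<in> W \<and> v \<in> W} \<union> tZer ?F ?F)"
    using W unfolding DG_subcoalgebra_def by auto
  have Wsub: "fun_vs.subspace W" using Wsp unfolding lspan_eq by (metis fun_vs.subspace_span)
  have Wfin: "W \<subseteq> finsupp" using WR grRep_finsupp by blast
  obtain x where x: "x \<in> W" "x \<notin> grZer ?F" using ZW W0 by blast
  have xR: "x \<in> grRep ?F" using x(1) WR by blast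
  obtain m x' where x': "x - x' \<in> grZer ?F" "slice x' m = slice x m" "slice x m \<notin> ?F (Suc m)"
      "\<And>n. m < n \<Longrightarrow> slice x' n = 0"
    by (rule grRep_truncate_top_degree[OF IGpow_filtration xR x(2)]) (rule that)
  have x'W: "x' \<in> W" using fun_vs.subspace_diff[OF Wsub x(1), of "x - x'"] x'(1) ZW by auto
  have x'R: "x' \<in> grRep ?F" using x'W WR by blast
  obtain y where r: "induced_rel ?F ?F ?F comulG x' y"
    and yW: "y \<in> fun_vs.span ({tens u v | u v. u \<in> W \<and> v \<in> W} \<union> tZer ?F ?F)"
    using co[OF x'W] unfolding lspan_eq by blast
  obtain f :: "('a \<Rightarrow> 'k) \<Rightarrow> 'k" where f: "Vector_Spaces.linear fscale (*) f"
    "\<And>u. u \<in> ?F (Suc m) \<Longrightarrow> f u = 0" "f (slice x m) = 1"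
    by (rule separating_functional[OF IGpow_subspace x'(3)]) (rule that)
  have "contract_degree f m y \<in> W"
    by (rule contract_degree_in_subcoalgebra[OF f(1) IGpow_filtration f(2) Wsub ZW Wfin yW])
  moreover have "contract_degree f m y - unit_rep \<in> grZer ?F"
  proof -
    have "y \<in> finsupp" using r tRep_finsupp by (auto simp: induced_rel_def)
    then have "contract_degree f m y - unit_rep \<in> finsupp"
      using finsupp_contract_degree[OF f(1)] unit_rep_finsupp by auto
    moreover have "slice (contract_degree f m y - unit_rep) p \<in> ?F (Suc p)" for p
    proof (cases p)
      case 0
      have "contract_snd f (slice2 y 0 m) - delta \<one> \<in> ?F (Suc 0)"
        using contract_snd_induced_degree_0[OF f(1,2) _ r x'R] f(3) x'(2) by simp
      with 0 show ?thesis by (simp add: slice_diff slice_contract_degree slice_unit_rep)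
    next
      case (Suc p')
      have "contract_snd f (slice2 y (Suc p') m) \<in> ?F (Suc (Suc p'))"
        by (rule contract_snd_induced_above_top[OF f(1) IGpow_filtration f(2) r comulG_zero x'(4)])
      with Suc show ?thesis by (simp add: slice_diff slice_contract_degree slice_unit_rep)
    qed
    ultimately show ?thesis by (simp add: grZer_def finsupp_iff)
  qed
  ultimately have "contract_degree f m y - (contract_degree f m y - unit_rep) \<in> W"
    using fun_vs.subspace_diff[OF Wsub] ZW by blast
  then show ?thesis by simp
qed

lemma DG_is_irreducible: "DG_irreducible TYPE('k::field) G"
  unfolding DG_irreducible_def
proof (intro allI impI)
  fix W1 W2 :: "(nat \<times> 'a \<Rightarrow> 'k) set"
  assume h: "DG_subcoalgebra G W1 \<and> DG_subcoalgebra G W2 \<and> W1 \<noteq> grZer (IGpow G) \<and> W2 \<noteq> grZer (IGpow G)"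
  then have "unit_rep \<in> W1" "unit_rep \<in> W2" using DG_subcoalgebra_contains_unit_rep by auto
  then show "W1 \<inter> W2 \<noteq> grZer (IGpow G)" using unit_rep_notin_grZer by auto
qed

end


section \<open>Cocommutativity of the coaction\<close>

lemma linext_in_subspace:
  assumes V: "fun_vs.subspace V" and h: "\<And>x. x \<in> supp u \<Longrightarrow> \<phi> x \<in> V"
  shows "linext \<phi> u \<in> V"
  unfolding linext_as_sum
  by (rule fun_vs.subspace_sum[OF V]) (use h fun_vs.subspace_scale[OF V] in auto)

lemma linext_swap: "linext (\<lambda>x. linext (\<lambda>y. F x y) v) u = linext (\<lambda>y. linext (\<lambda>x. F x y) u) v"
proof (rule ext)
  fix z
  show "linext (\<lambda>x. linext (\<lambda>y. F x y) v) u z = linext (\<lambda>y. linext (\<lambda>x. F x y) u) v z"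
    unfolding linext_def sum_distrib_left
    by (subst sum.swap) (rule sum.cong[OF refl], rule sum.cong[OF refl], simp only: ac_simps)
qed

lemma linext_diff_delta: "linext \<phi> (delta x - delta y) = \<phi> x - \<phi> y"
  by (simp add: fs_linear_diff[OF fs_linear_linext])

lemma tensor_map_comp:
  assumes "fs_linear \<alpha>" "fs_linear \<beta>" "X \<in> finsupp" "\<And>x. \<alpha>' (delta x) \<in> finsupp" "\<And>y. \<beta>' (delta y) \<in> finsupp"
  shows "tensor_map \<alpha> \<beta> (tensor_map \<alpha>' \<beta>' X) = linext (\<lambda>xy. tens (\<alpha> (\<alpha>' (delta (fst xy)))) (\<beta> (\<beta>' (delta (snd xy))))) X"
proof -
  have "tensor_map \<alpha> \<beta> (tensor_map \<alpha>' \<beta>' X) = linext (\<lambda>xy. tensor_map \<alpha> \<beta> (tens (\<alpha>' (delta (fst xy))) (\<beta>' (delta (snd xy))))) X"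
  proof -
    have ft: "fs_linear (tensor_map \<alpha> \<beta>)" unfolding tensor_map_def by (rule fs_linear_linext)
    show ?thesis unfolding tensor_map_def[of \<alpha>' \<beta>'] by (rule fs_linear_linext_apply[OF ft assms(3)]) (use assms in auto)
  qed
  also have "\<dots> = linext (\<lambda>xy. tens (\<alpha> (\<alpha>' (delta (fst xy)))) (\<beta> (\<beta>' (delta (snd xy))))) X"
    by (rule linext_fun_cong) (use assms in \<open>simp add: tensor_map_tens\<close>)
  finally show ?thesis .
qed

lemma tens_free: "u \<in> free X \<Longrightarrow> w \<in> free Y \<Longrightarrow> tens u w \<in> free (X \<times> Y)"
  by (auto simp: free_def supp_tens)

lemma linext_const: "linext (\<lambda>_. X) i = fscale (augmentation i) X"
  by (simp add: linext_def augmentation_eq_sum fun_eq_iff fscale_apply sum_distrib_right)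

lemma linext_fun_diff: "linext (\<lambda>y. f y - g y) i = linext f i - linext g i"
  by (simp add: linext_def fun_eq_iff minus_apply sum_subtractf right_diff_distrib)

locale gl_graph =
  fixes G :: "('g, 'm) monoid_scheme" (structure) and A :: "'a set"
    and s t :: "'a \<Rightarrow> 'g" and lact :: "'g \<Rightarrow> 'a \<Rightarrow> 'a" and ract :: "'a \<Rightarrow> 'g \<Rightarrow> 'a"
  assumes glg: "group_like_graph G A s t lact ract"

sublocale gl_graph \<subseteq> group G
  using glg by (simp add: group_like_graph_def)

context gl_graph
begin

lemma st_closed: "a \<in> A \<Longrightarrow> s a \<in> carrier G" "a \<in> A \<Longrightarrow> t a \<in> carrier G"
  using glg unfolding group_like_graph_def by auto
lemma act_closed: "g \<in> carrier G \<Longrightarrow> a \<in> A \<Longrightarrow> lact g a \<in> A"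
    "g \<in> carrier G \<Longrightarrow> a \<in> A \<Longrightarrow> ract a g \<in> A"
  using glg unfolding group_like_graph_def by auto
lemma act_one: "a \<in> A \<Longrightarrow> lact \<one> a = a" "a \<in> A \<Longrightarrow> ract a \<one> = a"
  using glg unfolding group_like_graph_def by auto
lemma act_mult:
  assumes "g \<in> carrier G" "h \<in> carrier G" "a \<in> A"
  shows "lact (g \<otimes> h) a = lact g (lact h a)" "ract a (g \<otimes> h) = ract (ract a g) h"
    "ract (lact g a) h = lact g (ract a h)"
  using glg assms unfolding group_like_graph_def by auto
lemma st_equiv:
  assumes "g \<in> carrier G" "a \<in> A"
  shows "s (lact g a) = g \<otimes> s a" "t (lact g a) = g \<otimes> t a" "s (ract a g) = s a \<otimes> g" "t (ract a g) = t a \<otimes> g"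
  using glg assms unfolding group_like_graph_def by auto

abbreviation IA :: "nat \<Rightarrow> ('a \<Rightarrow> 'k::field) set" where "IA \<equiv> IApow G A lact ract"

definition IA_gen :: "'a \<Rightarrow> ('g \<Rightarrow> 'k::field) \<Rightarrow> ('g \<Rightarrow> 'k) \<Rightarrow> 'a \<Rightarrow> 'k" where
  "IA_gen a v1 v2 = rmulA ract (lmulA lact v1 (delta a)) v2"

lemma lmulA_as_linext: "lmulA lact v w = linext (\<lambda>g. linext (\<lambda>b. delta (lact g b)) w) v"
  unfolding lmulA_def linext_def sum_distrib_left
  by (rule ext, intro sum.cong refl) (auto simp: delta_def)

lemma rmulA_as_linext: "rmulA ract w v = linext (\<lambda>b. linext (\<lambda>h. delta (ract b h)) v) w"
  unfolding rmulA_def linext_def sum_distrib_left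
  by (rule ext, intro sum.cong refl) (auto simp: delta_def)

lemma IA_gen_linext: "v1 \<in> finsupp \<Longrightarrow> IA_gen a v1 v2 = linext (\<lambda>g. linext (\<lambda>h. delta (ract (lact g a) h)) v2) v1"
  unfolding IA_gen_def rmulA_as_linext lmulA_as_linext
  by (subst linext_linext) auto

lemma IA_gen_free:
  fixes v1 v2 :: "'g \<Rightarrow> 'k::field"
  assumes "a \<in> A" "v1 \<in> free (carrier G)" "v2 \<in> free (carrier G)"
  shows "IA_gen a v1 v2 \<in> free A"
  unfolding IA_gen_linext[OF free_finsupp'[OF assms(2)]]
proof (rule linext_free[OF free_finsupp'[OF assms(2)]])
  fix g assume g: "g \<in> supp v1"
  show "linext (\<lambda>h. delta (ract (lact g a) h)) v2 \<in> free A"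
  proof (rule linext_free[OF free_finsupp'[OF assms(3)]])
    fix h assume h: "h \<in> supp v2"
    have "ract (lact g a) h \<in> A"
      using g h free_supp[OF assms(2)] free_supp[OF assms(3)] assms(1)
      by (intro act_closed) auto
    then show "(delta (ract (lact g a) h) :: 'a \<Rightarrow> 'k) \<in> free A" by (rule delta_free)
  qed
qed

lemma IA_as_span: "IA n = fun_vs.span {IA_gen a v1 v2 | v1 v2 a k. k \<le> n \<and> a \<in> A \<and> v1 \<in> IGpow G k \<and> v2 \<in> IGpow G (n - k)}"
  unfolding IApow_def lspan_eq IA_gen_def ..

lemma IA_free: "IA n \<subseteq> free A"
  unfolding IA_as_span
  by (rule fun_vs.span_minimal[OF _ free_subspace]) (auto intro!: IA_gen_free IGpow_free')

lemma IA_finsupp: "IA n \<subseteq> finsupp" using IA_free free_finsupp by blast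

lemma IA_subspace: "fun_vs.subspace (IA n)" unfolding IA_as_span by simp

lemma IA_gen_in_IA: "k \<le> n \<Longrightarrow> a \<in> A \<Longrightarrow> v1 \<in> IGpow G k \<Longrightarrow> v2 \<in> IGpow G (n - k) \<Longrightarrow> IA_gen a v1 v2 \<in> IA n"
  unfolding IA_as_span by (rule fun_vs.span_base) blast

lemma IA_Suc_subset: "(IA (Suc n) :: ('a \<Rightarrow> 'k::field) set) \<subseteq> IA n"
  unfolding IA_as_span[of "Suc n"]
proof (rule fun_vs.span_minimal[OF _ IA_subspace], clarify)
  fix v1 v2 :: "'g \<Rightarrow> 'k" and a k assume h: "k \<le> Suc n" "a \<in> A" "v1 \<in> IGpow G k" "v2 \<in> IGpow G (Suc n - k)"
  show "IA_gen a v1 v2 \<in> IA n"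
  proof (cases "k \<le> n")
    case True
    have "IGpow G (Suc n - k) \<subseteq> IGpow G (n - k)" by (rule IGpow_antimono) simp
    then have "v2 \<in> IGpow G (n - k)" using h(4) by blast
    then show ?thesis using True h by (intro IA_gen_in_IA) auto
  next
    case False
    then have k: "k = Suc n" using h(1) by simp
    have "v1 \<in> IGpow G n" using h(3) k IGpow_Suc_subset by auto
    moreover have "v2 \<in> IGpow G (n - n)" using h(4) k by simp
    ultimately show ?thesis using h(2) by (intro IA_gen_in_IA) auto
  qed
qed

lemma IA_filtration: "filtration IA"
  unfolding filtration_def using IA_subspace IA_Suc_subset IA_finsupp by blast

lemma gmul_delta_left: "u \<in> finsupp \<Longrightarrow> gmul G (delta g) u = linext (\<lambda>x. delta (g \<otimes> x)) u"
  unfolding gmul_as_linext by simp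

lemma gmul_delta_right: "u \<in> finsupp \<Longrightarrow> gmul G u (delta h) = linext (\<lambda>x. delta (x \<otimes> h)) u"
  unfolding gmul_as_linext by simp

lemma gmul_one_left: "u \<in> free (carrier G) \<Longrightarrow> gmul G (delta \<one>) u = u"
proof -
  assume u: "u \<in> free (carrier G)"
  have "gmul G (delta \<one>) u = linext (\<lambda>x. delta (\<one> \<otimes> x)) u" by (rule gmul_delta_left[OF free_finsupp'[OF u]])
  also have "\<dots> = linext delta u" by (rule linext_fun_cong) (use free_supp[OF u] in auto)
  finally show ?thesis using linext_expand[OF free_finsupp'[OF u]] by simp
qed

lemma gmul_one_right: "u \<in> free (carrier G) \<Longrightarrow> gmul G u (delta \<one>) = u"
proof -
  assume u: "u \<in> free (carrier G)"
  have "gmul G u (delta \<one>) = linext (\<lambda>x. delta (x \<otimes> \<one>)) u" by (rule gmul_delta_right[OF free_finsupp'[OF u]])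
  also have "\<dots> = linext delta u" by (rule linext_fun_cong) (use free_supp[OF u] in auto)
  finally show ?thesis using linext_expand[OF free_finsupp'[OF u]] by simp
qed

lemma delta_aug: "y \<in> carrier G \<Longrightarrow> (delta y - delta \<one> :: 'g \<Rightarrow> 'k::field) \<in> augI G"
  unfolding augI_augmentation
  by (auto intro!: fun_vs.subspace_diff[OF free_subspace] delta_free simp: augmentation_diff)

lemma augI_IGpow_1: "u \<in> augI G \<Longrightarrow> u \<in> IGpow G (Suc 0)" by (simp add: IGpow_1_eq_augI)

definition actA :: "'g \<Rightarrow> 'g \<Rightarrow> ('a \<Rightarrow> 'k::field) \<Rightarrow> ('a \<Rightarrow> 'k)" where
  "actA g h = linext (\<lambda>b. delta (ract (lact g b) h))"

definition actG :: "'g \<Rightarrow> 'g \<Rightarrow> ('g \<Rightarrow> 'k::field) \<Rightarrow> ('g \<Rightarrow> 'k)" where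
  "actG g h = linext (\<lambda>x. delta (g \<otimes> x \<otimes> h))"

definition act_tensor :: "'g \<Rightarrow> 'g \<Rightarrow> ('a \<times> 'g \<Rightarrow> 'k::field) \<Rightarrow> ('a \<times> 'g \<Rightarrow> 'k)" where
  "act_tensor g h = tensor_map (actA g h) (actG g h)"

lemma fs_linear_actA: "fs_linear (actA g h)" unfolding actA_def by (rule fs_linear_linext)
lemma fs_linear_actG: "fs_linear (actG g h)" unfolding actG_def by (rule fs_linear_linext)
lemma fs_linear_act_tensor: "fs_linear (act_tensor g h)" unfolding act_tensor_def tensor_map_def by (rule fs_linear_linext)

lemma act_tensor_tens: "u \<in> finsupp \<Longrightarrow> w \<in> finsupp \<Longrightarrow> act_tensor g h (tens u w) = tens (actA g h u) (actG g h w)"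
  unfolding act_tensor_def by (rule tensor_map_tens[OF fs_linear_actA fs_linear_actG])

lemma actA_IA_gen:
  fixes v1 v2 :: "'g \<Rightarrow> 'k::field"
  assumes g: "g \<in> carrier G" and h: "h \<in> carrier G" and a: "a \<in> A"
    and v1: "v1 \<in> free (carrier G)" and v2: "v2 \<in> free (carrier G)"
  shows "actA g h (IA_gen a v1 v2) = IA_gen a (gmul G (delta g) v1) (gmul G v2 (delta h))"
proof -
  have f1: "v1 \<in> finsupp" and f2: "v2 \<in> finsupp" using v1 v2 by (auto intro: free_finsupp')
  have f3: "gmul G (delta g) v1 \<in> finsupp" using f1 by (auto simp: gmul_delta_left intro!: linext_finsupp)
  have "actA g h (IA_gen a v1 v2) = linext (\<lambda>g'. linext (\<lambda>h'. delta (ract (lact g (ract (lact g' a) h')) h)) v2) v1"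
    unfolding IA_gen_linext[OF f1] actA_def
    by (subst linext_linext[OF f1], use f2 in \<open>auto intro!: linext_finsupp\<close>, rule linext_fun_cong, subst linext_linext[OF f2]) auto
  also have "\<dots> = linext (\<lambda>g'. linext (\<lambda>h'. delta (ract (lact (g \<otimes> g') a) (h' \<otimes> h))) v2) v1"
  proof (rule linext_fun_cong, rule linext_fun_cong)
    fix g' h' assume "g' \<in> supp v1" "h' \<in> supp v2"
    then have g': "g' \<in> carrier G" and h': "h' \<in> carrier G" using free_supp v1 v2 by auto
    have "ract (lact g (ract (lact g' a) h')) h = ract (ract (lact g (lact g' a)) h') h"
      using act_mult(3)[OF g h' act_closed(1)[OF g' a]] by simp
    also have "\<dots> = ract (lact (g \<otimes> g') a) (h' \<otimes> h)"
      using act_mult(2)[OF h' h, of "lact g (lact g' a)"] act_mult(1)[OF g g' a]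
        act_closed[OF g act_closed(1)[OF g' a]] by simp
    finally show "delta (ract (lact g (ract (lact g' a) h')) h) = delta (ract (lact (g \<otimes> g') a) (h' \<otimes> h))"
      by simp
  qed
  also have "\<dots> = IA_gen a (gmul G (delta g) v1) (gmul G v2 (delta h))"
  proof -
    have f3': "linext (\<lambda>x. delta (g \<otimes> x)) v1 \<in> finsupp" using f1 by (auto intro!: linext_finsupp)
    show ?thesis
      unfolding gmul_delta_left[OF f1] gmul_delta_right[OF f2] IA_gen_linext[OF f3']
      by (subst linext_linext[OF f1], simp, rule linext_fun_cong, subst linext_linext[OF f2]) auto
  qed
  finally show ?thesis .
qed

lemma actA_IA:
  assumes g: "g \<in> carrier G" and h: "h \<in> carrier G" and u: "u \<in> IA p"
  shows "actA g h u \<in> IA p"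
proof (rule fs_linear_span[OF fs_linear_actA _ IA_subspace])
  show "u \<in> fun_vs.span {IA_gen a v1 v2 | v1 v2 a k. k \<le> p \<and> a \<in> A \<and> v1 \<in> IGpow G k \<and> v2 \<in> IGpow G (p - k)}"
    using u unfolding IA_as_span .
  show "{IA_gen a v1 v2 | v1 v2 a k. k \<le> p \<and> a \<in> A \<and> v1 \<in> IGpow G k \<and> v2 \<in> IGpow G (p - k)} \<subseteq> finsupp"
    using IA_gen_free free_finsupp IGpow_free' by blast
  fix x assume "x \<in> {IA_gen a v1 v2 | v1 v2 a k. k \<le> p \<and> a \<in> A \<and> v1 \<in> IGpow G k \<and> v2 \<in> IGpow G (p - k)}"
  then obtain v1 v2 a k where x: "x = IA_gen a v1 v2" "k \<le> p" "a \<in> A" "v1 \<in> IGpow G k" "v2 \<in> IGpow G (p - k)"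
    by blast
  have "gmul G (delta g) v1 \<in> IGpow G (0 + k)" using IGpow_gmul[of "delta g" 0 v1 k] x(4) g by (simp add: delta_free)
  moreover have "gmul G v2 (delta h) \<in> IGpow G (p - k)" by (rule IGpow_gmul_right[OF x(5) delta_free[OF h]])
  ultimately show "actA g h x \<in> IA p"
    unfolding x(1) using x g h by (subst actA_IA_gen) (auto intro!: IA_gen_in_IA IGpow_free')
qed

lemma actG_gmul: "w \<in> free (carrier G) \<Longrightarrow> g \<in> carrier G \<Longrightarrow> h \<in> carrier G \<Longrightarrow>
    actG g h w = gmul G (gmul G (delta g) w) (delta h)"
proof -
  assume w: "w \<in> free (carrier G)" and g: "g \<in> carrier G" and h: "h \<in> carrier G"
  have wf: "w \<in> finsupp" using w by (rule free_finsupp')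
  have f3: "linext (\<lambda>x. delta (g \<otimes> x)) w \<in> finsupp" using wf by (auto intro!: linext_finsupp)
  show ?thesis
    unfolding gmul_delta_left[OF wf] gmul_delta_right[OF f3] actG_def
    by (subst linext_linext[OF wf]) auto
qed

lemma actG_IGpow: "w \<in> IGpow G q \<Longrightarrow> g \<in> carrier G \<Longrightarrow> h \<in> carrier G \<Longrightarrow> actG g h w \<in> IGpow G q"
proof -
  assume w: "w \<in> IGpow G q" and g: "g \<in> carrier G" and h: "h \<in> carrier G"
  have "gmul G (delta g) w \<in> IGpow G (0 + q)" by (rule IGpow_gmul) (use w delta_free[OF g] in auto)
  then have "gmul G (gmul G (delta g) w) (delta h) \<in> IGpow G q"
    using IGpow_gmul_right delta_free[OF h] by simp
  then show ?thesis using actG_gmul[OF IGpow_free'[OF w] g h] by simp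
qed

lemma actG_left_diff: "w \<in> IGpow G q \<Longrightarrow> y \<in> carrier G \<Longrightarrow> actG y \<one> w - w \<in> IGpow G (Suc q)"
proof -
  assume w: "w \<in> IGpow G q" and y: "y \<in> carrier G"
  have wf: "w \<in> free (carrier G)" using w by (rule IGpow_free')
  have "actG y \<one> w - w = gmul G (delta y - delta \<one>) w"
    using fs_linear_diff[OF fs_linear_gmul1[where G=G and v=w] finsupp_delta finsupp_delta, of y "\<one>"]
    by (simp add: actG_gmul[OF wf y one_closed] gmul_one_right[OF gmul_free[OF delta_free[OF y] wf]]
        gmul_one_left[OF wf])
  also have "\<dots> \<in> IGpow G (Suc 0 + q)" by (rule IGpow_gmul[OF augI_IGpow_1[OF delta_aug[OF y]] w])
  finally show ?thesis by simp
qed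

lemma actG_right_diff: "w \<in> IGpow G q \<Longrightarrow> y \<in> carrier G \<Longrightarrow> actG \<one> y w - w \<in> IGpow G (Suc q)"
proof -
  assume w: "w \<in> IGpow G q" and y: "y \<in> carrier G"
  have wf: "w \<in> free (carrier G)" using w by (rule IGpow_free')
  have "actG \<one> y w - w = gmul G w (delta y - delta \<one>)"
    using fs_linear_diff[OF fs_linear_gmul2[where G=G and u=w] finsupp_delta finsupp_delta, of y "\<one>"]
    by (simp add: actG_gmul[OF wf one_closed y] gmul_one_right[OF wf] gmul_one_left[OF wf])
  also have "\<dots> \<in> IGpow G (q + Suc 0)" by (rule IGpow_gmul[OF w augI_IGpow_1[OF delta_aug[OF y]]])
  finally show ?thesis by simp
qed

lemma IA_gen_linext2: "v1 \<in> finsupp \<Longrightarrow> IA_gen a v1 v2 = linext (\<lambda>h. linext (\<lambda>g. delta (ract (lact g a) h)) v1) v2"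
  by (rule trans[OF IA_gen_linext linext_swap])

lemma IA_gen_diff1: "v1 \<in> finsupp \<Longrightarrow> v1' \<in> finsupp \<Longrightarrow> IA_gen a v1 v2 - IA_gen a v1' v2 = IA_gen a (v1 - v1') v2"
  by (simp only: IA_gen_linext finsupp_diff fs_linear_diff[OF fs_linear_linext])

lemma IA_gen_diff2: "v1 \<in> finsupp \<Longrightarrow> v2 \<in> finsupp \<Longrightarrow> v2' \<in> finsupp \<Longrightarrow> IA_gen a v1 v2 - IA_gen a v1 v2' = IA_gen a v1 (v2 - v2')"
  by (simp only: IA_gen_linext2 fs_linear_diff[OF fs_linear_linext])

lemma IA_map_into:
  fixes L :: "('a \<Rightarrow> 'k::field) \<Rightarrow> ('c \<Rightarrow> 'k)" and u :: "'a \<Rightarrow> 'k"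
  assumes L: "fs_linear L" and V: "fun_vs.subspace V" and u: "u \<in> IA p"
    and gen: "\<And>(v1::'g \<Rightarrow> 'k) v2 a k. k \<le> p \<Longrightarrow> a \<in> A \<Longrightarrow> v1 \<in> IGpow G k \<Longrightarrow> v2 \<in> IGpow G (p - k) \<Longrightarrow> L (IA_gen a v1 v2) \<in> V"
  shows "L u \<in> V"
proof (rule fs_linear_span[OF L _ V])
  show "u \<in> fun_vs.span {IA_gen a v1 v2 | v1 v2 a k. k \<le> p \<and> a \<in> A \<and> v1 \<in> IGpow G k \<and> v2 \<in> IGpow G (p - k)}"
    using u unfolding IA_as_span .
  show "{IA_gen a v1 v2 | v1 v2 a k. k \<le> p \<and> a \<in> A \<and> v1 \<in> IGpow G k \<and> v2 \<in> IGpow G (p - k)} \<subseteq> finsupp"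
    using IA_gen_free free_finsupp IGpow_free' by blast
  fix x :: "'a \<Rightarrow> 'k" assume "x \<in> {IA_gen a v1 v2 | v1 v2 a k. k \<le> p \<and> a \<in> A \<and> v1 \<in> IGpow G k \<and> v2 \<in> IGpow G (p - k)}"
  then show "L x \<in> V" using gen by blast
qed

lemma actA_left_diff:
  fixes u :: "'a \<Rightarrow> 'k::field"
  shows "u \<in> IA p \<Longrightarrow> y \<in> carrier G \<Longrightarrow> actA y \<one> u - u \<in> IA (Suc p)"
proof -
  assume u: "u \<in> IA p" and y: "y \<in> carrier G"
  show ?thesis
  proof (rule IA_map_into[OF fs_linear_minus[OF fs_linear_actA fs_linear_id] IA_subspace u])
    fix v1 v2 :: "'g \<Rightarrow> 'k" and a k assume k: "k \<le> p" and a: "a \<in> A" and v1: "v1 \<in> IGpow G k" and v2: "v2 \<in> IGpow G (p - k)"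
    have v1f: "v1 \<in> free (carrier G)" and v2f: "v2 \<in> free (carrier G)" using v1 v2 by (auto intro: IGpow_free')
    have fd: "gmul G (delta y) v1 \<in> finsupp" using gmul_free[OF delta_free[OF y] v1f] by (rule free_finsupp')
    have "actA y \<one> (IA_gen a v1 v2) - IA_gen a v1 v2 = IA_gen a (gmul G (delta y) v1 - v1) v2"
      by (simp add: actA_IA_gen[OF y one_closed a v1f v2f] gmul_one_right[OF v2f] IA_gen_diff1[OF fd free_finsupp'[OF v1f]])
    also have "gmul G (delta y) v1 - v1 = gmul G (delta y - delta \<one>) v1"
      using fs_linear_diff[OF fs_linear_gmul1[where G=G and v=v1] finsupp_delta finsupp_delta, of y "\<one>"]
      by (simp add: gmul_one_left[OF v1f])
    also have "IA_gen a (gmul G (delta y - delta \<one>) v1) v2 \<in> IA (Suc p)"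
    proof (rule IA_gen_in_IA[OF _ a])
      show "gmul G (delta y - delta \<one>) v1 \<in> IGpow G (Suc k)"
        using IGpow_gmul[OF augI_IGpow_1[OF delta_aug[OF y]] v1] by simp
      show "v2 \<in> IGpow G (Suc p - Suc k)" using v2 by simp
    qed (use k in simp)
    finally show "actA y \<one> (IA_gen a v1 v2) - IA_gen a v1 v2 \<in> IA (Suc p)" .
  qed
qed

lemma actA_right_diff:
  fixes u :: "'a \<Rightarrow> 'k::field"
  shows "u \<in> IA p \<Longrightarrow> y \<in> carrier G \<Longrightarrow> actA \<one> y u - u \<in> IA (Suc p)"
proof -
  assume u: "u \<in> IA p" and y: "y \<in> carrier G"
  show ?thesis
  proof (rule IA_map_into[OF fs_linear_minus[OF fs_linear_actA fs_linear_id] IA_subspace u])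
    fix v1 v2 :: "'g \<Rightarrow> 'k" and a k assume k: "k \<le> p" and a: "a \<in> A" and v1: "v1 \<in> IGpow G k" and v2: "v2 \<in> IGpow G (p - k)"
    have v1f: "v1 \<in> free (carrier G)" and v2f: "v2 \<in> free (carrier G)" using v1 v2 by (auto intro: IGpow_free')
    have fd: "gmul G v2 (delta y) \<in> finsupp" using gmul_free[OF v2f delta_free[OF y]] by (rule free_finsupp')
    have "actA \<one> y (IA_gen a v1 v2) - IA_gen a v1 v2 = IA_gen a v1 (gmul G v2 (delta y) - v2)"
      by (simp add: actA_IA_gen[OF one_closed y a v1f v2f] gmul_one_left[OF v1f]
          IA_gen_diff2[OF free_finsupp'[OF v1f] fd free_finsupp'[OF v2f]])
    also have "gmul G v2 (delta y) - v2 = gmul G v2 (delta y - delta \<one>)"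
      using fs_linear_diff[OF fs_linear_gmul2[where G=G and u=v2] finsupp_delta finsupp_delta, of y "\<one>"]
      by (simp add: gmul_one_right[OF v2f])
    also have "IA_gen a v1 (gmul G v2 (delta y - delta \<one>)) \<in> IA (Suc p)"
    proof (rule IA_gen_in_IA[OF _ a v1])
      show "gmul G v2 (delta y - delta \<one>) \<in> IGpow G (Suc p - k)"
        using IGpow_gmul[OF v2 augI_IGpow_1[OF delta_aug[OF y]]] k by (simp add: Suc_diff_le)
    qed (use k in simp)
    finally show "actA \<one> y (IA_gen a v1 v2) - IA_gen a v1 v2 \<in> IA (Suc p)" .
  qed
qed

abbreviation IAG :: "nat \<Rightarrow> ('a \<times> 'g \<Rightarrow> 'k::field) set" where "IAG \<equiv> tFil IA (IGpow G)"

lemma IAG_subspace: "fun_vs.subspace (IAG j)" by (rule tFil_subspace)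

lemma IAG_free: "IAG j \<subseteq> free (A \<times> carrier G)"
proof
  fix X assume X: "X \<in> IAG j"
  have "(\<lambda>x. x) X \<in> free (A \<times> carrier G)"
    by (rule tFil_map[OF IA_filtration IGpow_filtration fs_linear_id free_subspace X])
       (use IA_free IGpow_free' in \<open>auto intro!: tens_free\<close>)
  then show "X \<in> free (A \<times> carrier G)" by simp
qed

lemma IAG_free': "X \<in> IAG j \<Longrightarrow> X \<in> free (A \<times> carrier G)" using IAG_free by blast

lemma act_tensor_IAG:
  fixes X :: "'a \<times> 'g \<Rightarrow> 'k::field"
  assumes g: "g \<in> carrier G" and h: "h \<in> carrier G" and X: "X \<in> IAG j"
  shows "act_tensor g h X \<in> IAG j"
proof (rule tFil_map[OF IA_filtration IGpow_filtration fs_linear_act_tensor IAG_subspace X])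
  fix p and u :: "'a \<Rightarrow> 'k" and w :: "'g \<Rightarrow> 'k"
  assume p: "p \<le> j" and u: "u \<in> IA p" and w: "w \<in> IGpow G (j - p)"
  have uf: "u \<in> finsupp" and wf: "w \<in> finsupp" using u w IA_finsupp IGpow_finsupp by auto
  show "act_tensor g h (tens u w) \<in> IAG j"
    unfolding act_tensor_tens[OF uf wf] using actA_IA[OF g h u] actG_IGpow[OF w g h] p by (rule tens_in_tFil[rotated 1])
qed

lemma act_tensor_left_diff:
  fixes X :: "'a \<times> 'g \<Rightarrow> 'k::field"
  assumes y: "y \<in> carrier G" and X: "X \<in> IAG j"
  shows "act_tensor y \<one> X - X \<in> IAG (Suc j)"
proof (rule tFil_map[OF IA_filtration IGpow_filtration fs_linear_minus[OF fs_linear_act_tensor fs_linear_id] IAG_subspace X])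
  fix p and u :: "'a \<Rightarrow> 'k" and w :: "'g \<Rightarrow> 'k"
  assume p: "p \<le> j" and u: "u \<in> IA p" and w: "w \<in> IGpow G (j - p)"
  have uf: "u \<in> finsupp" and wf: "w \<in> finsupp" using u w IA_finsupp IGpow_finsupp by auto
  have e: "act_tensor y \<one> (tens u w) - tens u w = tens (actA y \<one> u - u) (actG y \<one> w) + tens u (actG y \<one> w - w)"
    unfolding act_tensor_tens[OF uf wf] tens_sub_split by (simp add: tens_diff1 tens_diff2)
  have a: "tens (actA y \<one> u - u) (actG y \<one> w) \<in> IAG (Suc j)"
    by (rule tens_in_tFil[of "Suc p"]) (use p actA_left_diff[OF u y] actG_IGpow[OF w y one_closed] in auto)
  have b: "tens u (actG y \<one> w - w) \<in> IAG (Suc j)"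
    by (rule tens_in_tFil[of p]) (use p u actG_left_diff[OF w y] in \<open>auto simp: Suc_diff_le\<close>)
  show "act_tensor y \<one> (tens u w) - tens u w \<in> IAG (Suc j)"
    unfolding e by (rule fun_vs.subspace_add[OF IAG_subspace a b])
qed

lemma act_tensor_right_diff:
  fixes X :: "'a \<times> 'g \<Rightarrow> 'k::field"
  assumes y: "y \<in> carrier G" and X: "X \<in> IAG j"
  shows "act_tensor \<one> y X - X \<in> IAG (Suc j)"
proof (rule tFil_map[OF IA_filtration IGpow_filtration fs_linear_minus[OF fs_linear_act_tensor fs_linear_id] IAG_subspace X])
  fix p and u :: "'a \<Rightarrow> 'k" and w :: "'g \<Rightarrow> 'k"
  assume p: "p \<le> j" and u: "u \<in> IA p" and w: "w \<in> IGpow G (j - p)"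
  have uf: "u \<in> finsupp" and wf: "w \<in> finsupp" using u w IA_finsupp IGpow_finsupp by auto
  have e: "act_tensor \<one> y (tens u w) - tens u w = tens (actA \<one> y u - u) (actG \<one> y w) + tens u (actG \<one> y w - w)"
    unfolding act_tensor_tens[OF uf wf] tens_sub_split by (simp add: tens_diff1 tens_diff2)
  have a: "tens (actA \<one> y u - u) (actG \<one> y w) \<in> IAG (Suc j)"
    by (rule tens_in_tFil[of "Suc p"]) (use p actA_right_diff[OF u y] actG_IGpow[OF w one_closed y] in auto)
  have b: "tens u (actG \<one> y w - w) \<in> IAG (Suc j)"
    by (rule tens_in_tFil[of p]) (use p u actG_right_diff[OF w y] in \<open>auto simp: Suc_diff_le\<close>)
  show "act_tensor \<one> y (tens u w) - tens u w \<in> IAG (Suc j)"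
    unfolding e by (rule fun_vs.subspace_add[OF IAG_subspace a b])
qed

lemma act_comp:
  assumes g: "g \<in> carrier G" and g': "g' \<in> carrier G" and h: "h \<in> carrier G" and h': "h' \<in> carrier G" and x: "x \<in> A"
  shows "ract (lact g (ract (lact g' x) h')) h = ract (lact (g \<otimes> g') x) (h' \<otimes> h)"
proof -
  have "ract (lact g (ract (lact g' x) h')) h = ract (ract (lact g (lact g' x)) h') h"
    using act_mult(3)[OF g h' act_closed(1)[OF g' x]] by simp
  also have "\<dots> = ract (lact (g \<otimes> g') x) (h' \<otimes> h)"
    using act_mult(2)[OF h' h, of "lact g (lact g' x)"] act_mult(1)[OF g g' x]
      act_closed[OF g act_closed(1)[OF g' x]] by simp
  finally show ?thesis .
qed

lemma act_tensor_comp: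
  assumes X: "X \<in> free (A \<times> carrier G)" and g: "g \<in> carrier G" and g': "g' \<in> carrier G"
    and h: "h \<in> carrier G" and h': "h' \<in> carrier G"
  shows "act_tensor g h (act_tensor g' h' X) = act_tensor (g \<otimes> g') (h' \<otimes> h) X"
proof -
  have Xf: "X \<in> finsupp" using X by (rule free_finsupp')
  have "act_tensor g h (act_tensor g' h' X) = linext (\<lambda>xy. tens (actA g h (actA g' h' (delta (fst xy)))) (actG g h (actG g' h' (delta (snd xy))))) X"
    unfolding act_tensor_def by (rule tensor_map_comp[OF fs_linear_actA fs_linear_actG Xf]) (simp_all add: actA_def actG_def)
  also have "\<dots> = act_tensor (g \<otimes> g') (h' \<otimes> h) X"
    unfolding act_tensor_def tensor_map_def
  proof (rule linext_fun_cong)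
    fix xy assume "xy \<in> supp X"
    then have x: "fst xy \<in> A" and y: "snd xy \<in> carrier G" using X by (auto simp: free_def)
    show "tens (actA g h (actA g' h' (delta (fst xy)))) (actG g h (actG g' h' (delta (snd xy)))) =
        tens (actA (g \<otimes> g') (h' \<otimes> h) (delta (fst xy))) (actG (g \<otimes> g') (h' \<otimes> h) (delta (snd xy)))"
      using act_comp[OF g g' h h' x] g g' h h' y by (simp add: actA_def actG_def m_assoc)
  qed
  finally show ?thesis .
qed

definition diag_lmul :: "('g \<Rightarrow> 'k::field) \<Rightarrow> ('a \<times> 'g \<Rightarrow> 'k) \<Rightarrow> ('a \<times> 'g \<Rightarrow> 'k)" where
  "diag_lmul v X = linext (\<lambda>g. act_tensor g \<one> X) v"

definition diag_rmul :: "('a \<times> 'g \<Rightarrow> 'k::field) \<Rightarrow> ('g \<Rightarrow> 'k) \<Rightarrow> ('a \<times> 'g \<Rightarrow> 'k)" where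
  "diag_rmul X v = linext (\<lambda>h. act_tensor \<one> h X) v"

lemma act_tensor_finsupp: "X \<in> finsupp \<Longrightarrow> act_tensor g h X \<in> finsupp"
  unfolding act_tensor_def tensor_map_def by (rule linext_finsupp) (auto simp: actA_def actG_def)

lemma diag_lmul_augI:
  fixes X :: "'a \<times> 'g \<Rightarrow> 'k::field"
  assumes i: "i \<in> augI G" and X: "X \<in> IAG j"
  shows "diag_lmul i X \<in> IAG (Suc j)"
proof -
  have "diag_lmul i X = linext (\<lambda>y. act_tensor y \<one> X - X) i"
    unfolding diag_lmul_def linext_fun_diff linext_const using i by (simp add: augI_augmentation)
  also have "\<dots> \<in> IAG (Suc j)"
    by (rule linext_in_subspace[OF IAG_subspace]) (use act_tensor_left_diff X free_supp[OF augI_free'[OF i]] in auto)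
  finally show ?thesis .
qed

lemma diag_rmul_augI:
  fixes X :: "'a \<times> 'g \<Rightarrow> 'k::field"
  assumes i: "i \<in> augI G" and X: "X \<in> IAG j"
  shows "diag_rmul X i \<in> IAG (Suc j)"
proof -
  have "diag_rmul X i = linext (\<lambda>y. act_tensor \<one> y X - X) i"
    unfolding diag_rmul_def linext_fun_diff linext_const using i by (simp add: augI_augmentation)
  also have "\<dots> \<in> IAG (Suc j)"
    by (rule linext_in_subspace[OF IAG_subspace]) (use act_tensor_right_diff X free_supp[OF augI_free'[OF i]] in auto)
  finally show ?thesis .
qed

lemma diag_lmul_gmul:
  fixes X :: "'a \<times> 'g \<Rightarrow> 'k::field"
  assumes u: "u \<in> free (carrier G)" and i: "i \<in> free (carrier G)" and X: "X \<in> free (A \<times> carrier G)"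
  shows "diag_lmul (gmul G u i) X = diag_lmul u (diag_lmul i X)"
proof -
  have uf: "u \<in> finsupp" and iff: "i \<in> finsupp" and Xf: "X \<in> finsupp" using u i X by (auto intro: free_finsupp')
  have "diag_lmul (gmul G u i) X = linext (\<lambda>x. linext (\<lambda>g. act_tensor g \<one> X) (linext (\<lambda>y. delta (x \<otimes> y)) i)) u"
    unfolding diag_lmul_def gmul_as_linext by (rule linext_linext[OF uf]) (use iff in \<open>auto intro!: linext_finsupp\<close>)
  also have "\<dots> = linext (\<lambda>x. linext (\<lambda>y. act_tensor x \<one> (act_tensor y \<one> X)) i) u"
  proof (rule linext_fun_cong)
    fix x assume x: "x \<in> supp u"
    show "linext (\<lambda>g. act_tensor g \<one> X) (linext (\<lambda>y. delta (x \<otimes> y)) i) = linext (\<lambda>y. act_tensor x \<one> (act_tensor y \<one> X)) i"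
      by (subst linext_linext[OF iff], simp, rule linext_fun_cong)
         (use x free_supp[OF u] free_supp[OF i] in \<open>auto simp: act_tensor_comp[OF X]\<close>)
  qed
  also have "\<dots> = diag_lmul u (diag_lmul i X)"
    unfolding diag_lmul_def by (intro linext_fun_cong fs_linear_linext_apply[OF fs_linear_act_tensor iff, symmetric] act_tensor_finsupp Xf)
  finally show ?thesis .
qed

lemma diag_rmul_gmul:
  fixes X :: "'a \<times> 'g \<Rightarrow> 'k::field"
  assumes w: "w \<in> free (carrier G)" and i: "i \<in> free (carrier G)" and X: "X \<in> free (A \<times> carrier G)"
  shows "diag_rmul X (gmul G w i) = diag_rmul (diag_rmul X w) i"
proof -
  have wf: "w \<in> finsupp" and iff: "i \<in> finsupp" and Xf: "X \<in> finsupp" using w i X by (auto intro: free_finsupp')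
  have "diag_rmul X (gmul G w i) = linext (\<lambda>x. linext (\<lambda>h. act_tensor \<one> h X) (linext (\<lambda>y. delta (x \<otimes> y)) i)) w"
    unfolding diag_rmul_def gmul_as_linext by (rule linext_linext[OF wf]) (use iff in \<open>auto intro!: linext_finsupp\<close>)
  also have "\<dots> = linext (\<lambda>x. linext (\<lambda>y. act_tensor \<one> y (act_tensor \<one> x X)) i) w"
  proof (rule linext_fun_cong)
    fix x assume x: "x \<in> supp w"
    show "linext (\<lambda>h. act_tensor \<one> h X) (linext (\<lambda>y. delta (x \<otimes> y)) i) = linext (\<lambda>y. act_tensor \<one> y (act_tensor \<one> x X)) i"
      by (subst linext_linext[OF iff], simp, rule linext_fun_cong)
         (use x free_supp[OF w] free_supp[OF i] in \<open>auto simp: act_tensor_comp[OF X]\<close>)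
  qed
  also have "\<dots> = linext (\<lambda>y. linext (\<lambda>x. act_tensor \<one> y (act_tensor \<one> x X)) w) i" by (rule linext_swap)
  also have "\<dots> = diag_rmul (diag_rmul X w) i"
    unfolding diag_rmul_def by (intro linext_fun_cong fs_linear_linext_apply[OF fs_linear_act_tensor wf, symmetric] act_tensor_finsupp Xf)
  finally show ?thesis .
qed

lemma diag_lmul_IAG:
  fixes X :: "'a \<times> 'g \<Rightarrow> 'k::field" and v :: "'g \<Rightarrow> 'k"
  shows "v \<in> IGpow G k \<Longrightarrow> X \<in> IAG j \<Longrightarrow> diag_lmul v X \<in> IAG (j + k)"
proof (induction k arbitrary: v X j)
  case 0
  then show ?case unfolding diag_lmul_def
    by (intro linext_in_subspace[OF IAG_subspace]) (auto intro!: act_tensor_IAG intro: free_supp')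
next
  case (Suc k)
  let ?S = "{gmul G u v |u v. u \<in> IGpow G k \<and> v \<in> augI G} :: ('g \<Rightarrow> 'k) set"
  have Sf: "?S \<subseteq> finsupp" using IGpow_gen_finsupp by blast
  have fl: "fs_linear (\<lambda>v. diag_lmul v X)" unfolding diag_lmul_def by (rule fs_linear_linext)
  show ?case
  proof (rule fs_linear_span[OF fl Sf IAG_subspace])
    show "v \<in> fun_vs.span ?S" using Suc.prems(1) unfolding IGpow.simps lspan_eq .
    fix x assume "x \<in> ?S"
    then obtain u i where x: "x = gmul G u i" "u \<in> IGpow G k" "i \<in> augI G" by blast
    have "diag_lmul x X = diag_lmul u (diag_lmul i X)"
      unfolding x(1) by (rule diag_lmul_gmul) (use x Suc.prems in \<open>auto intro: IGpow_free' augI_free' IAG_free'\<close>)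
    also have "\<dots> \<in> IAG (Suc j + k)" by (rule Suc.IH[OF x(2) diag_lmul_augI[OF x(3) Suc.prems(2)]])
    finally show "diag_lmul x X \<in> IAG (j + Suc k)" by simp
  qed
qed

lemma diag_rmul_IAG:
  fixes X :: "'a \<times> 'g \<Rightarrow> 'k::field" and v :: "'g \<Rightarrow> 'k"
  shows "v \<in> IGpow G l \<Longrightarrow> X \<in> IAG j \<Longrightarrow> diag_rmul X v \<in> IAG (j + l)"
proof (induction l arbitrary: v)
  case 0
  then show ?case unfolding diag_rmul_def
    by (intro linext_in_subspace[OF IAG_subspace]) (auto intro!: act_tensor_IAG intro: free_supp')
next
  case (Suc l)
  let ?S = "{gmul G u v |u v. u \<in> IGpow G l \<and> v \<in> augI G} :: ('g \<Rightarrow> 'k) set"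
  have Sf: "?S \<subseteq> finsupp" using IGpow_gen_finsupp by blast
  have fl: "fs_linear (\<lambda>v. diag_rmul X v)" unfolding diag_rmul_def by (rule fs_linear_linext)
  show ?case
  proof (rule fs_linear_span[OF fl Sf IAG_subspace])
    show "v \<in> fun_vs.span ?S" using Suc.prems(1) unfolding IGpow.simps lspan_eq .
    fix x assume "x \<in> ?S"
    then obtain w i where x: "x = gmul G w i" "w \<in> IGpow G l" "i \<in> augI G" by blast
    have "diag_rmul X x = diag_rmul (diag_rmul X w) i"
      unfolding x(1) by (rule diag_rmul_gmul) (use x Suc.prems in \<open>auto intro: IGpow_free' augI_free' IAG_free'\<close>)
    also have "\<dots> \<in> IAG (Suc (j + l))" by (rule diag_rmul_augI[OF x(3) Suc.IH[OF x(2) Suc.prems(2)]])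
    finally show "diag_rmul X x \<in> IAG (j + Suc l)" by simp
  qed
qed

definition coaction_defect :: "('a \<Rightarrow> 'k::field) \<Rightarrow> ('a \<times> 'g \<Rightarrow> 'k)" where
  "coaction_defect u = tswap (coactGA s u) - coactAG t u"

lemma coaction_defect_linext: "u \<in> finsupp \<Longrightarrow> coaction_defect u = linext (\<lambda>b. tens (delta b) (delta (s b) - delta (t b))) u"
proof (rule ext, clarify)
  fix b x assume u: "u \<in> finsupp"
  have "linext (\<lambda>b. tens (delta b) (delta (s b) - delta (t b))) u (b, x)
      = (\<Sum>b'\<in>supp u. if b' = b then u b * ((if x = s b then 1 else 0) - (if x = t b then 1 else 0)) else 0)"
    unfolding linext_def by (intro sum.cong refl) (auto simp: tens_apply delta_def minus_apply)
  also have "\<dots> = (if b \<in> supp u then u b * ((if x = s b then 1 else 0) - (if x = t b then 1 else 0)) else 0)"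
    using u by (simp add: finsupp_iff sum.delta')
  also have "\<dots> = coaction_defect u (b, x)"
    by (auto simp: coaction_defect_def tswap_def coactGA_def coactAG_def minus_apply)
  finally show "coaction_defect u (b, x) = linext (\<lambda>b. tens (delta b) (delta (s b) - delta (t b))) u (b, x)" by simp
qed

lemma fs_linear_coaction_defect: "fs_linear coaction_defect"
  unfolding fs_linear_def by (simp add: coaction_defect_linext linext_add linext_fscale finsupp_fscale finsupp_add)

lemma delta_diff_aug: "x \<in> carrier G \<Longrightarrow> y \<in> carrier G \<Longrightarrow> (delta x - delta y :: 'g \<Rightarrow> 'k::field) \<in> augI G"
  unfolding augI_augmentation
  by (auto intro!: fun_vs.subspace_diff[OF free_subspace] delta_free simp: augmentation_diff)

lemma IA_gen_one: "a \<in> A \<Longrightarrow> IA_gen a (delta \<one>) (delta \<one>) = delta a"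
  by (simp add: IA_gen_linext act_one)

lemma coaction_defect_delta_IAG:
  assumes a: "a \<in> A"
  shows "(tens (delta a) (delta (s a) - delta (t a)) :: 'a \<times> 'g \<Rightarrow> 'k::field) \<in> IAG (Suc 0)"
proof (rule tens_in_tFil[of 0])
  show "(delta a :: 'a \<Rightarrow> 'k) \<in> IA 0"
    using IA_gen_in_IA[of 0 0 a "delta \<one>" "delta \<one>"] a by (simp add: IA_gen_one delta_free)
  show "(delta (s a) - delta (t a) :: 'g \<Rightarrow> 'k) \<in> IGpow G (Suc 0 - 0)"
    using delta_diff_aug[OF st_closed[OF a]] by (simp add: IGpow_1_eq_augI)
qed simp

lemma coaction_defect_IA_gen:
  fixes v1 v2 :: "'g \<Rightarrow> 'k::field"
  assumes a: "a \<in> A" and v1: "v1 \<in> free (carrier G)" and v2: "v2 \<in> free (carrier G)"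
  shows "coaction_defect (IA_gen a v1 v2) = diag_lmul v1 (diag_rmul (tens (delta a) (delta (s a) - delta (t a))) v2)"
proof -
  let ?X = "tens (delta a) (delta (s a) - delta (t a)) :: 'a \<times> 'g \<Rightarrow> 'k"
  have f1: "v1 \<in> finsupp" and f2: "v2 \<in> finsupp" using v1 v2 by (auto intro: free_finsupp')
  have Xf: "?X \<in> free (A \<times> carrier G)" using IAG_free'[OF coaction_defect_delta_IAG[OF a]] .
  have Xfin: "?X \<in> finsupp" using Xf by (rule free_finsupp')
  have "coaction_defect (IA_gen a v1 v2) = linext (\<lambda>g. linext (\<lambda>h. coaction_defect (delta (ract (lact g a) h))) v2) v1"
    unfolding IA_gen_linext[OF f1]
    by (subst fs_linear_linext_apply[OF fs_linear_coaction_defect f1], use f2 in \<open>auto intro!: linext_finsupp\<close>,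
        rule linext_fun_cong, subst fs_linear_linext_apply[OF fs_linear_coaction_defect f2]) auto
  also have "\<dots> = linext (\<lambda>g. linext (\<lambda>h. act_tensor g h ?X) v2) v1"
  proof (rule linext_fun_cong, rule linext_fun_cong)
    fix g h assume "g \<in> supp v1" "h \<in> supp v2"
    then have g: "g \<in> carrier G" and h: "h \<in> carrier G" using free_supp v1 v2 by auto
    have "coaction_defect (delta (ract (lact g a) h) :: 'a \<Rightarrow> 'k)
        = tens (delta (ract (lact g a) h)) (delta (s (ract (lact g a) h)) - delta (t (ract (lact g a) h)))"
      by (simp add: coaction_defect_linext)
    also have "\<dots> = tens (delta (ract (lact g a) h)) (delta (g \<otimes> s a \<otimes> h) - delta (g \<otimes> t a \<otimes> h))"
      using st_equiv[OF h act_closed(1)[OF g a]] st_equiv[OF g a] by simp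
    also have "\<dots> = act_tensor g h ?X"
      unfolding act_tensor_tens[OF finsupp_delta finsupp_diff[OF finsupp_delta finsupp_delta]]
      by (simp add: linext_diff_delta actA_def actG_def)
    finally show "coaction_defect (delta (ract (lact g a) h) :: 'a \<Rightarrow> 'k) = act_tensor g h ?X" .
  qed
  also have "\<dots> = linext (\<lambda>g. linext (\<lambda>h. act_tensor g \<one> (act_tensor \<one> h ?X)) v2) v1"
  proof (rule linext_fun_cong, rule linext_fun_cong)
    fix g h assume "g \<in> supp v1" "h \<in> supp v2"
    then have g: "g \<in> carrier G" and h: "h \<in> carrier G" using free_supp v1 v2 by auto
    show "act_tensor g h ?X = act_tensor g \<one> (act_tensor \<one> h ?X)" using act_tensor_comp[OF Xf g one_closed one_closed h] g h by simp
  qed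
  also have "\<dots> = diag_lmul v1 (diag_rmul ?X v2)"
    unfolding diag_lmul_def diag_rmul_def
    by (intro linext_fun_cong fs_linear_linext_apply[OF fs_linear_act_tensor f2, symmetric] act_tensor_finsupp Xfin)
  finally show ?thesis .
qed

lemma coaction_defect_IA:
  fixes u :: "'a \<Rightarrow> 'k::field"
  assumes u: "u \<in> IA n"
  shows "coaction_defect u \<in> IAG (Suc n)"
proof (rule IA_map_into[OF fs_linear_coaction_defect IAG_subspace u])
  fix v1 v2 :: "'g \<Rightarrow> 'k" and a k
  assume k: "k \<le> n" and a: "a \<in> A" and v1: "v1 \<in> IGpow G k" and v2: "v2 \<in> IGpow G (n - k)"
  have "diag_rmul (tens (delta a) (delta (s a) - delta (t a))) v2 \<in> IAG (Suc 0 + (n - k))"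
    by (rule diag_rmul_IAG[OF v2 coaction_defect_delta_IAG[OF a]])
  then have "diag_lmul v1 (diag_rmul (tens (delta a) (delta (s a) - delta (t a))) v2) \<in> IAG (Suc 0 + (n - k) + k)"
    by (rule diag_lmul_IAG[OF v1])
  then show "coaction_defect (IA_gen a v1 v2) \<in> IAG (Suc n)"
    using k by (simp add: coaction_defect_IA_gen[OF a IGpow_free'[OF v1] IGpow_free'[OF v2]])
qed

lemma DQ_is_cocommutative: "DQ_cocommutative TYPE('k::field) G A s t lact ract"
  unfolding DQ_cocommutative_def
proof (intro ballI allI impI)
  fix x :: "nat \<times> 'a \<Rightarrow> 'k" and y1 y2
  assume x: "x \<in> grRep IA"
    and r: "induced_rel IA IA (IGpow G) (coactAG t) x y1 \<and> induced_rel IA (IGpow G) IA (coactGA s) x y2"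
  have xs: "slice x n \<in> IA n" for n using x by (simp add: grRep_def)
  have c: "tswap (coactGA s (slice x n)) - coactAG t (slice x n) \<in> IAG (Suc n)" for n
    using coaction_defect_IA[OF xs[of n]] by (simp add: coaction_defect_def)
  have c': "tswap (coactAG t (slice x n)) - coactGA s (slice x n) \<in> tFil (IGpow G) IA (Suc n)" for n
  proof -
    have "tswap (tswap (coactGA s (slice x n)) - coactAG t (slice x n)) \<in> tFil (IGpow G) IA (Suc n)"
      by (rule tswap_tFil[OF IA_filtration IGpow_filtration c])
    then have "- tswap (tswap (coactGA s (slice x n)) - coactAG t (slice x n)) \<in> tFil (IGpow G) IA (Suc n)"
      by (rule fun_vs.subspace_neg[OF tFil_subspace])
    then show ?thesis by (simp add: tswap_diff)
  qed
  have 1: "tswap y2 - y1 \<in> tZer IA (IGpow G)"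
    using r by (intro tswap_induced_diff_tZer[OF IA_filtration IGpow_filtration _ _ c]) auto
  have 2: "tswap y1 - y2 \<in> tZer (IGpow G) IA"
    using r by (intro tswap_induced_diff_tZer[OF IGpow_filtration IA_filtration _ _ c']) auto
  show "(\<lambda>z. y2 (prod.swap z)) - y1 \<in> tZer IA (IGpow G) \<and> (\<lambda>z. y1 (prod.swap z)) - y2 \<in> tZer (IGpow G) IA"
    using 1 2 by (simp add: tswap_def)
qed

end


theorem mainTheorem10:
  fixes G :: "('g, 'm) monoid_scheme" and A :: "'a set"
    and s t :: "'a \<Rightarrow> 'g" and lact :: "'g \<Rightarrow> 'a \<Rightarrow> 'a" and ract :: "'a \<Rightarrow> 'g \<Rightarrow> 'a"
  assumes "group_like_graph G A s t lact ract"
    and "path_connected G A s t"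
  shows "DG_irreducible TYPE('k::field_char_0) G
       \<and> DG_cocommutative TYPE('k) G
       \<and> DQ_cocommutative TYPE('k) G A s t lact ract"
proof -
  interpret gl_graph G A s t lact ract by (rule gl_graph.intro) (fact assms(1))
  show ?thesis using DG_is_irreducible DG_is_cocommutative DQ_is_cocommutative by blast
qed

end
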